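(* Let $X$ and $Y$ be $\mathfrak{Q}$-preordered $\mathfrak{Q}$-subsets. Then the following collections are pairwise in bijection: (a) $\mathfrak{Q}$-distributors from $X$ to $Y$; (b) $\mathfrak{Q}$-order-preserving maps $Y\to\mathsf{P}X$; (c) $\mathfrak{Q}$-order-preserving maps $X\to\mathsf{P}^{\dagger}Y$; (d) $\mathfrak{Q}$-polarities from $X$ to $Y$; (e) $\mathfrak{Q}$-axialities from $Y$ to $X$; (f) dual $\mathfrak{Q}$-axialities from $Y$ to $X$.
   Context: $(\mathfrak{Q},\&,e)$ is a non-trivial unital quantale (complete lattice with associative multiplication with unit $e$ preserving joins in each variable, $\bot<e$), implications $p\& q\le r\iff p\le r/ q\iff q\le p\backslash r$, $\mathcal{D}\mathfrak{Q}(p,q)=\{u\mid (u/ p)\& p=u=q\&(q\backslash u)\}$. A $\mathfrak{Q}$-subset is a set $X$ with $|\cdot|\colon X\to\mathfrak{Q}$; $\mathbf{1}_q$ is $\{*\}$ with $|*|=q$. A $\mathfrak{Q}$-relation from $X$ to $Y$ is a map $\phi\colon X\times Y\to\mathfrak{Q}$ with $\phi(x,y)\in\mathcal{D}\mathfrak{Q}(|x|,|y|)$, ordered pointwise; composition $(\psi\circ\phi)(x,z)=\bigvee_y(\psi(y,z)/|y|)\&\phi(x,y)$; $\xi\swarrow\phi$ is the largest $\psi'$ with $\psi'\circ\phi\le\xi$ and $\psi\searrow\xi$ the largest $\phi'$ with $\psi\circ\phi'\le\xi$. A $\mathfrak{Q}$-preordered $\mathfrak{Q}$-subset is a $\mathfrak{Q}$-subset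 $X$ with a $\mathfrak{Q}$-relation $1_X^{\natural}$ on $X$ with $\mathrm{id}_X\le 1_X^{\natural}$ ($\mathrm{id}_X(x,x)=|x|$, else $\bot$) and $1_X^{\natural}\circ 1_X^{\natural}\le 1_X^{\natural}$. A $\mathfrak{Q}$-order-preserving map $h\colon A\to B$ satisfies $|ha|=|a|$ and $1_A^{\natural}(a,a')\le 1_B^{\natural}(ha,ha')$; $h\le k$ means $|a|\le 1_B^{\natural}(ha,ka)$ for all $a$; a $\mathfrak{Q}$-Galois connection $h\dashv k$ means $1_A\le kh$ and $hk\le 1_B$. A $\mathfrak{Q}$-distributor from $X$ to $Y$ is a $\mathfrak{Q}$-relation $\phi$ with $1_Y^{\natural}\circ\phi\circ 1_X^{\natural}\le\phi$. $\mathsf{P}X$ consists of $\mathfrak{Q}$-relations $\mu$ from $X$ to some $\mathbf{1}_q$ with $\mu\circ 1_X^{\natural}\le\mu$, $|\mu|=q$, $\mathfrak{Q}$-preorder $1_{\mathsf{P}X}^{\natural}(\mu,\mu')=\mu'\swarrow\mu$; $\mathsf{P}^{\dagger}X$ consists of $\mathfrak{Q}$-relations $\lambda$ from some $\mathbf{1}_q$ to $X$ with $1_X^{\natural}\circ\lambda\le\lambda$, $|\lambda|=q$, $1_{\mathsf{P}^{\dagger}X}^{\natural}(\lambda,\lambda')=\lambda'\searrow\lambda$. A $\mathfrak{Q}$-polarity from $X$ to $Y$ is a $\mathfrak{Q}$-Galois connection $f\dashv g$ with $f\colon\mathsf{P}X\to\mathsf{P}^{\dagger}Y$, $g\colon\mathsf{P}^{\dagger}Y\to\mathsf{P}X$;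 a $\mathfrak{Q}$-axiality from $Y$ to $X$ is a $\mathfrak{Q}$-Galois connection $f\dashv g$ with $f\colon\mathsf{P}Y\to\mathsf{P}X$, $g\colon\mathsf{P}X\to\mathsf{P}Y$; a dual $\mathfrak{Q}$-axiality from $Y$ to $X$ is a $\mathfrak{Q}$-Galois connection $f\dashv g$ with $f\colon\mathsf{P}^{\dagger}Y\to\mathsf{P}^{\dagger}X$, $g\colon\mathsf{P}^{\dagger}X\to\mathsf{P}^{\dagger}Y$. *)

theory Defs
  imports Main
begin

class quantale = complete_lattice +
  fixes qmult :: "'a \<Rightarrow> 'a \<Rightarrow> 'a"
    and qunit :: 'a
  assumes qmult_assoc: "qmult (qmult a b) c = qmult a (qmult b c)"
    and qunit_left: "qmult qunit a = a"
    and qunit_right: "qmult a qunit = a"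
    and qmult_Sup_left: "qmult (Sup A) b = Sup ((\<lambda>a. qmult a b) ` A)"
    and qmult_Sup_right: "qmult a (Sup B) = Sup ((\<lambda>b. qmult a b) ` B)"
    and qunit_nontrivial: "bot < qunit"

text \<open>Implications: rdiv r q = r / q, ldiv p r = p \ r.\<close>

definition rdiv :: "'q::quantale \<Rightarrow> 'q \<Rightarrow> 'q" where
  "rdiv r q = Sup {p. qmult p q \<le> r}"

definition ldiv :: "'q::quantale \<Rightarrow> 'q \<Rightarrow> 'q" where
  "ldiv p r = Sup {q. qmult p q \<le> r}"

definition DQ :: "'q::quantale \<Rightarrow> 'q \<Rightarrow> 'q set" where
  "DQ p q = {u. qmult (rdiv u p) p = u \<and> u = qmult q (ldiv q u)}"

text \<open>A Q-subset: a carrier set with an extent map.\<close>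
type_synonym ('a, 'q) qset = "'a set \<times> ('a \<Rightarrow> 'q)"

definition one_q :: "'q \<Rightarrow> (unit, 'q) qset" where
  "one_q q = ({()}, \<lambda>_. q)"

text \<open>Q-relations are represented extensionally: value bot outside the carriers.\<close>
definition qrel :: "('a, 'q::quantale) qset \<Rightarrow> ('b, 'q) qset \<Rightarrow> ('a \<Rightarrow> 'b \<Rightarrow> 'q) \<Rightarrow> bool" where
  "qrel A B \<phi> \<longleftrightarrow>
     (\<forall>x\<in>fst A. \<forall>y\<in>fst B. \<phi> x y \<in> DQ (snd A x) (snd B y)) \<and>
     (\<forall>x y. x \<notin> fst A \<or> y \<notin> fst B \<longrightarrow> \<phi> x y = bot)"

definition rle :: "('a, 'q::quantale) qset \<Rightarrow> ('b, 'q) qset \<Rightarrow> ('a \<Rightarrow> 'b \<Rightarrow> 'q) \<Rightarrow> ('a \<Rightarrow> 'b \<Rightarrow> 'q) \<Rightarrow> bool" where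
  "rle A B \<phi> \<psi> \<longleftrightarrow> (\<forall>x\<in>fst A. \<forall>y\<in>fst B. \<phi> x y \<le> \<psi> x y)"

definition qcomp :: "('b, 'q::quantale) qset \<Rightarrow> ('b \<Rightarrow> 'c \<Rightarrow> 'q) \<Rightarrow> ('a \<Rightarrow> 'b \<Rightarrow> 'q) \<Rightarrow> ('a \<Rightarrow> 'c \<Rightarrow> 'q)" where
  "qcomp B \<psi> \<phi> = (\<lambda>x z. Sup ((\<lambda>y. qmult (rdiv (\<psi> y z) (snd B y)) (\<phi> x y)) ` fst B))"

definition qid :: "('a, 'q::quantale) qset \<Rightarrow> ('a \<Rightarrow> 'a \<Rightarrow> 'q)" where
  "qid A = (\<lambda>x x'. if x \<in> fst A \<and> x' = x then snd A x else bot)"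

text \<open>xi swarrow phi (phi : A -> B, xi : A -> C): the largest psi' : B -> C with
  psi' o phi <= xi.\<close>
definition rimp :: "('a, 'q::quantale) qset \<Rightarrow> ('b, 'q) qset \<Rightarrow> ('c, 'q) qset \<Rightarrow>
    ('a \<Rightarrow> 'c \<Rightarrow> 'q) \<Rightarrow> ('a \<Rightarrow> 'b \<Rightarrow> 'q) \<Rightarrow> ('b \<Rightarrow> 'c \<Rightarrow> 'q)" where
  "rimp A B C \<xi> \<phi> = (THE \<psi>. qrel B C \<psi> \<and> rle A C (qcomp B \<psi> \<phi>) \<xi> \<and>
       (\<forall>\<psi>'. qrel B C \<psi>' \<and> rle A C (qcomp B \<psi>' \<phi>) \<xi> \<longrightarrow> rle B C \<psi>' \<psi>))"

text \<open>psi searrow xi (psi : B -> C, xi : A -> C): the largest phi' : A -> B with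
  psi o phi' <= xi.\<close>
definition limp :: "('a, 'q::quantale) qset \<Rightarrow> ('b, 'q) qset \<Rightarrow> ('c, 'q) qset \<Rightarrow>
    ('b \<Rightarrow> 'c \<Rightarrow> 'q) \<Rightarrow> ('a \<Rightarrow> 'c \<Rightarrow> 'q) \<Rightarrow> ('a \<Rightarrow> 'b \<Rightarrow> 'q)" where
  "limp A B C \<psi> \<xi> = (THE \<phi>. qrel A B \<phi> \<and> rle A C (qcomp B \<psi> \<phi>) \<xi> \<and>
       (\<forall>\<phi>'. qrel A B \<phi>' \<and> rle A C (qcomp B \<psi> \<phi>') \<xi> \<longrightarrow> rle A B \<phi>' \<phi>))"

record ('a, 'q) qpos =
  car :: "'a set"
  ext :: "'a \<Rightarrow> 'q"
  pre :: "'a \<Rightarrow> 'a \<Rightarrow> 'q"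

definition qs :: "('a, 'q) qpos \<Rightarrow> ('a, 'q) qset" where
  "qs X = (car X, ext X)"

definition qpreordered :: "('a, 'q::quantale) qpos \<Rightarrow> bool" where
  "qpreordered X \<longleftrightarrow>
     qrel (qs X) (qs X) (pre X) \<and>
     rle (qs X) (qs X) (qid (qs X)) (pre X) \<and>
     rle (qs X) (qs X) (qcomp (qs X) (pre X) (pre X)) (pre X)"

definition qdist :: "('a, 'q::quantale) qpos \<Rightarrow> ('b, 'q) qpos \<Rightarrow> ('a \<Rightarrow> 'b \<Rightarrow> 'q) \<Rightarrow> bool" where
  "qdist X Y \<phi> \<longleftrightarrow> qrel (qs X) (qs Y) \<phi> \<and>
     rle (qs X) (qs Y) (qcomp (qs X) (qcomp (qs Y) (pre Y) \<phi>) (pre X)) \<phi>"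

definition distributors :: "('a, 'q::quantale) qpos \<Rightarrow> ('b, 'q) qpos \<Rightarrow> ('a \<Rightarrow> 'b \<Rightarrow> 'q) set" where
  "distributors X Y = {\<phi>. qdist X Y \<phi>}"

definition PP_car :: "('a, 'q::quantale) qpos \<Rightarrow> ('q \<times> ('a \<Rightarrow> unit \<Rightarrow> 'q)) set" where
  "PP_car X = {(q, \<mu>). qrel (qs X) (one_q q) \<mu> \<and>
                        rle (qs X) (one_q q) (qcomp (qs X) \<mu> (pre X)) \<mu>}"

definition PP :: "('a, 'q::quantale) qpos \<Rightarrow> ('q \<times> ('a \<Rightarrow> unit \<Rightarrow> 'q), 'q) qpos" where
  "PP X = \<lparr> car = PP_car X, ext = fst,
            pre = (\<lambda>(q, \<mu>) (q', \<mu>').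
                     if (q, \<mu>) \<in> PP_car X \<and> (q', \<mu>') \<in> PP_car X
                     then rimp (qs X) (one_q q) (one_q q') \<mu>' \<mu> () ()
                     else bot) \<rparr>"

definition PD_car :: "('a, 'q::quantale) qpos \<Rightarrow> ('q \<times> (unit \<Rightarrow> 'a \<Rightarrow> 'q)) set" where
  "PD_car X = {(q, l). qrel (one_q q) (qs X) l \<and>
                        rle (one_q q) (qs X) (qcomp (qs X) (pre X) l) l}"

definition PD :: "('a, 'q::quantale) qpos \<Rightarrow> ('q \<times> (unit \<Rightarrow> 'a \<Rightarrow> 'q), 'q) qpos" where
  "PD X = \<lparr> car = PD_car X, ext = fst,
            pre = (\<lambda>(q, l) (q', l').
                     if (q, l) \<in> PD_car X \<and> (q', l') \<in> PD_car X
                     then limp (one_q q) (one_q q') (qs X) l' l () ()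
                     else bot) \<rparr>"

text \<open>Maps are represented extensionally (undefined outside the domain carrier).\<close>
definition qmono :: "('a, 'q::quantale) qpos \<Rightarrow> ('b, 'q) qpos \<Rightarrow> ('a \<Rightarrow> 'b) \<Rightarrow> bool" where
  "qmono A B h \<longleftrightarrow>
     (\<forall>a\<in>car A. h a \<in> car B \<and> ext B (h a) = ext A a) \<and>
     (\<forall>a\<in>car A. \<forall>a'\<in>car A. pre A a a' \<le> pre B (h a) (h a')) \<and>
     (\<forall>a. a \<notin> car A \<longrightarrow> h a = undefined)"

definition qmaps :: "('a, 'q::quantale) qpos \<Rightarrow> ('b, 'q) qpos \<Rightarrow> ('a \<Rightarrow> 'b) set" where
  "qmaps A B = {h. qmono A B h}"

definition qgalois :: "('a, 'q::quantale) qpos \<Rightarrow> ('b, 'q) qpos \<Rightarrow> ('a \<Rightarrow> 'b) \<Rightarrow> ('b \<Rightarrow> 'a) \<Rightarrow> bool" where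
  "qgalois A B f g \<longleftrightarrow> qmono A B f \<and> qmono B A g \<and>
     (\<forall>a\<in>car A. ext A a \<le> pre A a (g (f a))) \<and>
     (\<forall>b\<in>car B. ext B b \<le> pre B (f (g b)) b)"

definition qgalois_set :: "('a, 'q::quantale) qpos \<Rightarrow> ('b, 'q) qpos \<Rightarrow> (('a \<Rightarrow> 'b) \<times> ('b \<Rightarrow> 'a)) set" where
  "qgalois_set A B = {(f, g). qgalois A B f g}"

definition polarities where "polarities X Y = qgalois_set (PP X) (PD Y)"
definition axialities where "axialities Y X = qgalois_set (PP Y) (PP X)"
definition dual_axialities where "dual_axialities Y X = qgalois_set (PD Y) (PD X)"

end

theory Submission
  imports Defs "HOL-Library.FuncSet"
begin

text \<open>Read column by column, a distributor \<open>\<phi>\<close> from \<open>X\<close> to \<open>Y\<close> is an order-preserving family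
  \<open>y \<mapsto> \<phi>(-, y)\<close> of presheaves on \<open>X\<close>; read row by row, it is a family \<open>x \<mapsto> \<phi>(x, -)\<close>
  of copresheaves on \<open>Y\<close>. This gives (b) and (c). A distributor also induces three Galois
  connections: \<open>\<phi> \<swarrow> -\<close> left adjoint to \<open>- \<searrow> \<phi>\<close> (a polarity), \<open>- \<circ> \<phi>\<close> left adjoint to
  \<open>- \<swarrow> \<phi>\<close> (an axiality) and \<open>\<phi> \<searrow> -\<close> left adjoint to \<open>\<phi> \<circ> -\<close> (a dual axiality); the
  implications involved only have one-point domain or codomain, so they are joins of those
  elements of \<open>DQ p q\<close> that satisfy a family of inequalities. Conversely, composing one adjoint of
  a Galois connection with the Yoneda (or co-Yoneda) embedding gives a map as in (b) or (c), hence
  a distributor, and the unit and counit force both adjoints to agree pointwise with the maps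
  induced by that distributor.\<close>

section \<open>Residuation in a quantale\<close>

lemma qmult_mono_left: "(a::'q::quantale) \<le> b \<Longrightarrow> qmult a c \<le> qmult b c"
  using qmult_Sup_left[of "{a, b}" c] by (simp add: sup.absorb2 le_iff_sup)

lemma qmult_mono_right: "(a::'q::quantale) \<le> b \<Longrightarrow> qmult c a \<le> qmult c b"
  using qmult_Sup_right[of c "{a, b}"] by (simp add: sup.absorb2 le_iff_sup)

lemma qmult_mono: "(a::'q::quantale) \<le> b \<Longrightarrow> c \<le> d \<Longrightarrow> qmult a c \<le> qmult b d"
  by (meson order_trans qmult_mono_left qmult_mono_right)

lemma qmult_bot_left [simp]: "qmult (bot::'q::quantale) a = bot"
  using qmult_Sup_left[of "{}" a] by simp

lemma qmult_bot_right [simp]: "qmult a (bot::'q::quantale) = bot"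
  using qmult_Sup_right[of a "{}"] by simp

lemma le_rdiv_iff: "(p::'q::quantale) \<le> rdiv r q \<longleftrightarrow> qmult p q \<le> r"
proof
  have "qmult (rdiv r q) q \<le> r"
    unfolding rdiv_def qmult_Sup_left by (auto intro: Sup_least)
  then show "p \<le> rdiv r q \<Longrightarrow> qmult p q \<le> r"
    by (meson order_trans qmult_mono_left)
qed (simp add: rdiv_def Sup_upper)

lemma le_ldiv_iff: "(q::'q::quantale) \<le> ldiv p r \<longleftrightarrow> qmult p q \<le> r"
proof
  have "qmult p (ldiv p r) \<le> r"
    unfolding ldiv_def qmult_Sup_right by (auto intro: Sup_least)
  then show "q \<le> ldiv p r \<Longrightarrow> qmult p q \<le> r"
    by (meson order_trans qmult_mono_right)
qed (simp add: ldiv_def Sup_upper)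

lemma rdiv_mult_le: "qmult (rdiv r q) q \<le> (r::'q::quantale)"
  using le_rdiv_iff by blast

lemma mult_ldiv_le: "qmult p (ldiv p r) \<le> (r::'q::quantale)"
  using le_ldiv_iff by blast

lemma rdiv_mono: "(a::'q::quantale) \<le> b \<Longrightarrow> rdiv a q \<le> rdiv b q"
  by (meson le_rdiv_iff order_trans rdiv_mult_le)

lemma ldiv_mono: "(a::'q::quantale) \<le> b \<Longrightarrow> ldiv q a \<le> ldiv q b"
  by (meson le_ldiv_iff order_trans mult_ldiv_le)

lemma mult_rdiv_le_rdiv_mult: "qmult a (rdiv b p) \<le> rdiv (qmult a b) (p::'q::quantale)"
  by (metis le_rdiv_iff qmult_assoc qmult_mono_right rdiv_mult_le)

lemma le_mult_rdiv: "p \<le> a \<Longrightarrow> (u::'q::quantale) \<le> qmult (rdiv a p) u"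
  by (metis le_rdiv_iff qmult_mono_left qunit_left)

lemma le_rdiv_mult_factor: "t = qmult s p \<Longrightarrow> t \<le> r \<Longrightarrow> t \<le> qmult (rdiv r p) (p::'q::quantale)"
  by (metis le_rdiv_iff qmult_mono_left)

lemma rdiv_mult_eq_mult_ldiv:
  "qmult (rdiv b q) q = b \<Longrightarrow> qmult q (ldiv q a) = a \<Longrightarrow>
   qmult (rdiv b q) a = qmult b (ldiv q (a::'q::quantale))"
  by (metis qmult_assoc)

lemma DQ_rdiv_cancel: "u \<in> DQ p q \<Longrightarrow> qmult (rdiv u p) p = u"
  by (simp add: DQ_def)

lemma DQ_ldiv_cancel: "u \<in> DQ p q \<Longrightarrow> qmult q (ldiv q u) = u"
  by (simp add: DQ_def)

lemma DQ_le_mult_rdiv: "u \<in> DQ p q \<Longrightarrow> p \<le> a \<Longrightarrow> u \<le> qmult (rdiv u p) (a::'q::quantale)"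
  by (metis DQ_rdiv_cancel qmult_mono_right)

lemma DQ_rdiv_bot_mult: "u \<in> DQ p q \<Longrightarrow> qmult (rdiv bot q) u = bot"
proof -
  assume "u \<in> DQ p q"
  then have "qmult (rdiv bot q) u = qmult (qmult (rdiv bot q) q) (ldiv q u)"
    by (metis DQ_ldiv_cancel qmult_assoc)
  also have "\<dots> \<le> qmult bot (ldiv q u)" by (intro qmult_mono_left rdiv_mult_le)
  finally show ?thesis by (simp add: bot_unique)
qed

lemma rdiv_mult_assoc:
  assumes "qmult (rdiv w q) q = w" and "qmult q (ldiv q m) = m"
  shows "qmult (rdiv (qmult a w) q) m = qmult a (qmult (rdiv w q) (m::'q::quantale))"
proof -
  have "qmult (rdiv (qmult a w) q) q = qmult a w"
    by (metis antisym assms(1) le_rdiv_mult_factor qmult_assoc order_refl rdiv_mult_le)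
  then have "qmult (rdiv (qmult a w) q) m = qmult (qmult a w) (ldiv q m)"
    using rdiv_mult_eq_mult_ldiv assms(2) by blast
  also have "\<dots> = qmult a (qmult (rdiv w q) m)"
    using rdiv_mult_eq_mult_ldiv[OF assms] by (simp add: qmult_assoc)
  finally show ?thesis .
qed

lemma DQ_comp: "v \<in> DQ q r \<Longrightarrow> w \<in> DQ p q \<Longrightarrow> qmult (rdiv v q) w \<in> DQ p r"
proof -
  assume v: "v \<in> DQ q r" and w: "w \<in> DQ p q"
  define c where "c = qmult (rdiv v q) w"
  have "c = qmult (qmult (rdiv v q) (rdiv w p)) p"
    unfolding c_def by (metis DQ_rdiv_cancel[OF w] qmult_assoc)
  then have "qmult (rdiv c p) p = c"
    by (metis antisym le_rdiv_mult_factor order_refl rdiv_mult_le)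
  moreover have "c = qmult r (qmult (ldiv r v) (ldiv q w))"
    unfolding c_def rdiv_mult_eq_mult_ldiv[OF DQ_rdiv_cancel[OF v] DQ_ldiv_cancel[OF w]]
    by (metis DQ_ldiv_cancel[OF v] qmult_assoc)
  then have "qmult r (ldiv r c) = c"
    by (metis antisym le_ldiv_iff mult_ldiv_le qmult_mono_right order_refl)
  ultimately show ?thesis unfolding c_def DQ_def by auto
qed

lemma DQ_Sup: "S \<subseteq> DQ p q \<Longrightarrow> Sup S \<in> DQ p q"
proof -
  assume S: "S \<subseteq> DQ p q"
  have "Sup S \<le> qmult (rdiv (Sup S) p) p"
  proof (rule Sup_least)
    fix s assume "s \<in> S"
    then show "s \<le> qmult (rdiv (Sup S) p) p"
      using S DQ_rdiv_cancel le_rdiv_mult_factor by (metis Sup_upper subsetD)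
  qed
  moreover have "Sup S \<le> qmult q (ldiv q (Sup S))"
  proof (rule Sup_least)
    fix s assume s: "s \<in> S"
    then have "s = qmult q (ldiv q s)" using S DQ_ldiv_cancel by (metis subsetD)
    also have "\<dots> \<le> qmult q (ldiv q (Sup S))"
      using s by (intro qmult_mono_right ldiv_mono Sup_upper)
    finally show "s \<le> qmult q (ldiv q (Sup S))" .
  qed
  ultimately show ?thesis
    unfolding DQ_def using rdiv_mult_le[of "Sup S" p] mult_ldiv_le[of q "Sup S"]
    by (auto intro: antisym)
qed

lemma DQ_refl: "p \<in> DQ p (p::'q::quantale)"
proof -
  have "qmult (rdiv p p) p = p"
    by (metis antisym le_rdiv_mult_factor order_refl qunit_left rdiv_mult_le)
  moreover have "p \<le> qmult p (ldiv p p)"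
    by (metis le_ldiv_iff qmult_mono_right qunit_right order_refl)
  ultimately show ?thesis
    unfolding DQ_def using mult_ldiv_le[of p p] by (auto intro: antisym)
qed

section \<open>Implications with one-point domain or codomain\<close>

definition dq_rimp :: "'q::quantale \<Rightarrow> 'q \<Rightarrow> 'i set \<Rightarrow> ('i \<Rightarrow> 'q) \<Rightarrow> ('i \<Rightarrow> 'q) \<Rightarrow> 'q" where
  "dq_rimp p q I c d = Sup {u \<in> DQ p q. \<forall>i\<in>I. qmult (rdiv u p) (c i) \<le> d i}"

definition dq_limp :: "'q::quantale \<Rightarrow> 'q \<Rightarrow> 'i set \<Rightarrow> ('i \<Rightarrow> 'q) \<Rightarrow> ('i \<Rightarrow> 'q) \<Rightarrow> 'q" where
  "dq_limp p q I c d = Sup {u \<in> DQ p q. \<forall>i\<in>I. qmult (c i) u \<le> d i}"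

lemma dq_rimp_DQ: "dq_rimp p q I c d \<in> DQ p q"
  unfolding dq_rimp_def by (rule DQ_Sup) auto

lemma dq_limp_DQ: "dq_limp p q I c d \<in> DQ p q"
  unfolding dq_limp_def by (rule DQ_Sup) auto

lemma dq_rimp_greatest:
  "u \<in> DQ p q \<Longrightarrow> (\<And>i. i \<in> I \<Longrightarrow> qmult (rdiv u p) (c i) \<le> d i) \<Longrightarrow> u \<le> dq_rimp p q I c d"
  unfolding dq_rimp_def by (auto intro: Sup_upper)

lemma dq_limp_greatest:
  "u \<in> DQ p q \<Longrightarrow> (\<And>i. i \<in> I \<Longrightarrow> qmult (c i) u \<le> d i) \<Longrightarrow> u \<le> dq_limp p q I c d"
  unfolding dq_limp_def by (auto intro: Sup_upper)

text \<open>For \<open>c i\<close> divisible by \<open>p\<close> on the left, \<open>qmult (rdiv u p) (c i) = qmult u (ldiv p (c i))\<close>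
  on \<open>DQ p q\<close>, so the constraint is preserved by joins in \<open>u\<close>.\<close>
lemma dq_rimp_le:
  assumes c: "\<And>i. i \<in> I \<Longrightarrow> qmult p (ldiv p (c i)) = c i" and i: "i \<in> I"
  shows "qmult (rdiv (dq_rimp p q I c d) p) (c i) \<le> d i"
proof -
  let ?S = "{u \<in> DQ p q. \<forall>i\<in>I. qmult (rdiv u p) (c i) \<le> d i}"
  have as_mult: "qmult (rdiv u p) (c i) = qmult u (ldiv p (c i))" if "u \<in> DQ p q" for u
    using rdiv_mult_eq_mult_ldiv[OF DQ_rdiv_cancel[OF that] c[OF i]] .
  have "qmult (Sup ?S) (ldiv p (c i)) \<le> d i"
    unfolding qmult_Sup_left using i as_mult by (auto intro!: Sup_least)
  then show ?thesis
    using as_mult[OF dq_rimp_DQ[of p q I c d]] by (simp add: dq_rimp_def)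
qed

lemma dq_limp_le: "i \<in> I \<Longrightarrow> qmult (c i) (dq_limp p q I c d) \<le> d i"
  unfolding dq_limp_def qmult_Sup_right by (auto intro!: Sup_least)

section \<open>Presheaves and copresheaves\<close>

lemma fst_one_q [simp]: "fst (one_q q) = {()}"
  by (simp add: one_q_def)

lemma snd_one_q [simp]: "snd (one_q q) u = q"
  by (simp add: one_q_def)

lemma qrel_qs:
  "qrel (qs X) (qs Y) \<phi> \<longleftrightarrow>
     (\<forall>x\<in>car X. \<forall>y\<in>car Y. \<phi> x y \<in> DQ (ext X x) (ext Y y)) \<and>
     (\<forall>x y. x \<notin> car X \<or> y \<notin> car Y \<longrightarrow> \<phi> x y = bot)"
  by (simp add: qrel_def qs_def)

lemma car_PP [simp]: "car (PP X) = PP_car X" and ext_PP [simp]: "ext (PP X) = fst"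
  by (simp_all add: PP_def)

lemma car_PD [simp]: "car (PD X) = PD_car X" and ext_PD [simp]: "ext (PD X) = fst"
  by (simp_all add: PD_def)

lemma PP_carI:
  assumes "\<And>x. x \<in> car X \<Longrightarrow> \<mu> x () \<in> DQ (ext X x) q"
    and "\<And>x. x \<notin> car X \<Longrightarrow> \<mu> x () = bot"
    and "\<And>x x'. x \<in> car X \<Longrightarrow> x' \<in> car X \<Longrightarrow>
           qmult (rdiv (\<mu> x' ()) (ext X x')) (pre X x x') \<le> \<mu> x ()"
  shows "(q, \<mu>) \<in> PP_car X"
  using assms unfolding PP_car_def
  by (auto simp: qrel_def qs_def rle_def qcomp_def intro!: Sup_least)

lemma PD_carI:
  assumes "\<And>y. y \<in> car Y \<Longrightarrow> l () y \<in> DQ q (ext Y y)"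
    and "\<And>y. y \<notin> car Y \<Longrightarrow> l () y = bot"
    and "\<And>y y'. y \<in> car Y \<Longrightarrow> y' \<in> car Y \<Longrightarrow>
           qmult (rdiv (pre Y y' y) (ext Y y')) (l () y') \<le> l () y"
  shows "(q, l) \<in> PD_car Y"
  using assms unfolding PD_car_def
  by (auto simp: qrel_def qs_def rle_def qcomp_def intro!: Sup_least)

lemma PP_car_DQ: "a \<in> PP_car X \<Longrightarrow> x \<in> car X \<Longrightarrow> snd a x () \<in> DQ (ext X x) (fst a)"
  by (auto simp: PP_car_def qrel_def qs_def)

lemma PP_car_bot: "a \<in> PP_car X \<Longrightarrow> x \<notin> car X \<Longrightarrow> snd a x u = bot"
  by (auto simp: PP_car_def qrel_def qs_def)

lemma PP_car_closed:
  assumes "a \<in> PP_car X" and "x \<in> car X" and "x' \<in> car X"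
  shows "qmult (rdiv (snd a x' ()) (ext X x')) (pre X x x') \<le> snd a x ()"
proof -
  have "qcomp (qs X) (snd a) (pre X) x () \<le> snd a x ()"
    using assms by (auto simp: PP_car_def rle_def qs_def)
  then show ?thesis
    using assms(3) unfolding qcomp_def qs_def by (auto dest: order_trans[rotated] intro: Sup_upper)
qed

lemma PD_car_DQ: "b \<in> PD_car Y \<Longrightarrow> y \<in> car Y \<Longrightarrow> snd b () y \<in> DQ (fst b) (ext Y y)"
  by (auto simp: PD_car_def qrel_def qs_def)

lemma PD_car_bot: "b \<in> PD_car Y \<Longrightarrow> y \<notin> car Y \<Longrightarrow> snd b u y = bot"
  by (auto simp: PD_car_def qrel_def qs_def)

lemma PD_car_closed:
  assumes "b \<in> PD_car Y" and "y \<in> car Y" and "y' \<in> car Y"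
  shows "qmult (rdiv (pre Y y' y) (ext Y y')) (snd b () y') \<le> snd b () y"
proof -
  have "qcomp (qs Y) (pre Y) (snd b) () y \<le> snd b () y"
    using assms by (auto simp: PD_car_def rle_def qs_def)
  then show ?thesis
    using assms(3) unfolding qcomp_def qs_def by (auto dest: order_trans[rotated] intro: Sup_upper)
qed

lemma PP_eqI:
  assumes "a \<in> PP_car X" and "b \<in> PP_car X" and "fst a = fst b"
    and "\<And>x. x \<in> car X \<Longrightarrow> snd a x () = snd b x ()"
  shows "a = b"
proof -
  have "snd a x u = snd b x u" for x u
    using assms by (cases u; cases "x \<in> car X") (auto simp: PP_car_bot)
  then show ?thesis using assms(3) by (simp add: prod_eq_iff fun_eq_iff)
qed

lemma PD_eqI:
  assumes "a \<in> PD_car Y" and "b \<in> PD_car Y" and "fst a = fst b"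
    and "\<And>y. y \<in> car Y \<Longrightarrow> snd a () y = snd b () y"
  shows "a = b"
proof -
  have "snd a u y = snd b u y" for y u
    using assms by (cases u; cases "y \<in> car Y") (auto simp: PD_car_bot)
  then show ?thesis using assms(3) by (simp add: prod_eq_iff fun_eq_iff)
qed

text \<open>Between one-point Q-subsets, the largest relation in the definition of \<open>rimp\<close>
  (and of \<open>limp\<close> below) is the one-point implication \<open>dq_rimp\<close> (resp. \<open>dq_limp\<close>).\<close>
lemma PP_pre:
  assumes a: "a \<in> PP_car X" and b: "b \<in> PP_car X"
  shows "pre (PP X) a b = dq_rimp (fst a) (fst b) (car X) (\<lambda>x. snd a x ()) (\<lambda>x. snd b x ())"
proof -
  obtain q \<mu> q' \<mu>' where ab: "a = (q, \<mu>)" "b = (q', \<mu>')" by fastforce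
  let ?h = "dq_rimp q q' (car X) (\<lambda>x. \<mu> x ()) (\<lambda>x. \<mu>' x ())"
  let ?P = "\<lambda>\<psi>. qrel (one_q q) (one_q q') \<psi> \<and> rle (qs X) (one_q q') (qcomp (one_q q) \<psi> \<mu>) \<mu>' \<and>
     (\<forall>\<psi>'. qrel (one_q q) (one_q q') \<psi>' \<and> rle (qs X) (one_q q') (qcomp (one_q q) \<psi>' \<mu>) \<mu>'
        \<longrightarrow> rle (one_q q) (one_q q') \<psi>' \<psi>)"
  have le: "qmult (rdiv ?h q) (\<mu> x ()) \<le> \<mu>' x ()" if "x \<in> car X" for x
    using PP_car_DQ[OF a] ab that by (intro dq_rimp_le) (auto intro: DQ_ldiv_cancel)
  have h: "?P (\<lambda>_ _. ?h)"
    using le dq_rimp_DQ by (auto simp: qrel_def rle_def qcomp_def qs_def intro!: dq_rimp_greatest)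
  have "(THE \<psi>. ?P \<psi>) = (\<lambda>_ _. ?h)"
  proof (rule the_equality)
    fix \<psi> assume "?P \<psi>"
    then have "\<psi> () () \<le> ?h" and "?h \<le> \<psi> () ()"
      using h by (auto simp: qrel_def rle_def qcomp_def qs_def intro!: dq_rimp_greatest)
    then show "\<psi> = (\<lambda>_ _. ?h)" unfolding fun_eq_iff by (auto intro: antisym)
  qed (fact h)
  then show ?thesis using a b ab by (simp add: PP_def rimp_def)
qed

lemma PD_pre:
  assumes a: "a \<in> PD_car Y" and b: "b \<in> PD_car Y"
  shows "pre (PD Y) a b = dq_limp (fst a) (fst b) (car Y) (\<lambda>y. rdiv (snd b () y) (fst b)) (\<lambda>y. snd a () y)"
proof -
  obtain q l q' l' where ab: "a = (q, l)" "b = (q', l')" by fastforce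
  let ?h = "dq_limp q q' (car Y) (\<lambda>y. rdiv (l' () y) q') (\<lambda>y. l () y)"
  let ?P = "\<lambda>\<psi>. qrel (one_q q) (one_q q') \<psi> \<and> rle (one_q q) (qs Y) (qcomp (one_q q') l' \<psi>) l \<and>
     (\<forall>\<psi>'. qrel (one_q q) (one_q q') \<psi>' \<and> rle (one_q q) (qs Y) (qcomp (one_q q') l' \<psi>') l
        \<longrightarrow> rle (one_q q) (one_q q') \<psi>' \<psi>)"
  have h: "?P (\<lambda>_ _. ?h)"
    using dq_limp_le dq_limp_DQ
    by (auto simp: qrel_def rle_def qcomp_def qs_def intro!: dq_limp_greatest)
  have "(THE \<psi>. ?P \<psi>) = (\<lambda>_ _. ?h)"
  proof (rule the_equality)
    fix \<psi> assume "?P \<psi>"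
    then have "\<psi> () () \<le> ?h" and "?h \<le> \<psi> () ()"
      using h by (auto simp: qrel_def rle_def qcomp_def qs_def intro!: dq_limp_greatest)
    then show "\<psi> = (\<lambda>_ _. ?h)" unfolding fun_eq_iff by (auto intro: antisym)
  qed (fact h)
  then show ?thesis using a b ab by (simp add: PD_def limp_def)
qed

lemma PP_pre_DQ: "a \<in> PP_car X \<Longrightarrow> b \<in> PP_car X \<Longrightarrow> pre (PP X) a b \<in> DQ (fst a) (fst b)"
  by (simp add: PP_pre dq_rimp_DQ)

lemma PP_pre_le:
  "a \<in> PP_car X \<Longrightarrow> b \<in> PP_car X \<Longrightarrow> x \<in> car X \<Longrightarrow>
   qmult (rdiv (pre (PP X) a b) (fst a)) (snd a x ()) \<le> snd b x ()"
  unfolding PP_pre by (rule dq_rimp_le) (auto intro: DQ_ldiv_cancel PP_car_DQ)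

lemma PP_pre_greatest:
  "a \<in> PP_car X \<Longrightarrow> b \<in> PP_car X \<Longrightarrow> u \<in> DQ (fst a) (fst b) \<Longrightarrow>
   (\<And>x. x \<in> car X \<Longrightarrow> qmult (rdiv u (fst a)) (snd a x ()) \<le> snd b x ()) \<Longrightarrow>
   u \<le> pre (PP X) a b"
  unfolding PP_pre by (rule dq_rimp_greatest)

lemma PD_pre_DQ: "a \<in> PD_car Y \<Longrightarrow> b \<in> PD_car Y \<Longrightarrow> pre (PD Y) a b \<in> DQ (fst a) (fst b)"
  by (simp add: PD_pre dq_limp_DQ)

lemma PD_pre_le:
  "a \<in> PD_car Y \<Longrightarrow> b \<in> PD_car Y \<Longrightarrow> y \<in> car Y \<Longrightarrow>
   qmult (rdiv (snd b () y) (fst b)) (pre (PD Y) a b) \<le> snd a () y"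
  unfolding PD_pre by (rule dq_limp_le)

lemma PD_pre_greatest:
  "a \<in> PD_car Y \<Longrightarrow> b \<in> PD_car Y \<Longrightarrow> u \<in> DQ (fst a) (fst b) \<Longrightarrow>
   (\<And>y. y \<in> car Y \<Longrightarrow> qmult (rdiv (snd b () y) (fst b)) u \<le> snd a () y) \<Longrightarrow>
   u \<le> pre (PD Y) a b"
  unfolding PD_pre by (rule dq_limp_greatest)

lemma PP_extent_le_pre_iff:
  assumes a: "a \<in> PP_car X" and b: "b \<in> PP_car X" and "fst a = q" and "fst b = q"
  shows "q \<le> pre (PP X) a b \<longleftrightarrow> (\<forall>x\<in>car X. snd a x () \<le> snd b x ())"
proof
  have unit_mult: "qmult (rdiv q q) (snd a x ()) = snd a x ()" if "x \<in> car X" for x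
    using rdiv_mult_eq_mult_ldiv[OF DQ_rdiv_cancel[OF DQ_refl] DQ_ldiv_cancel[OF PP_car_DQ[OF a that]]]
      DQ_ldiv_cancel[OF PP_car_DQ[OF a that]] assms(3) by (simp add: qmult_assoc)
  show "\<forall>x\<in>car X. snd a x () \<le> snd b x ()" if "q \<le> pre (PP X) a b"
  proof
    fix x assume x: "x \<in> car X"
    have "snd a x () = qmult (rdiv q q) (snd a x ())" using unit_mult x by simp
    also have "\<dots> \<le> qmult (rdiv (pre (PP X) a b) q) (snd a x ())"
      by (intro qmult_mono_left rdiv_mono that)
    also have "\<dots> \<le> snd b x ()" using PP_pre_le[OF a b x] assms(3) by simp
    finally show "snd a x () \<le> snd b x ()" .
  qed
  show "q \<le> pre (PP X) a b" if "\<forall>x\<in>car X. snd a x () \<le> snd b x ()"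
    using that unit_mult DQ_refl[of q] assms(3,4) by (intro PP_pre_greatest[OF a b]) auto
qed

lemma PD_extent_le_pre_iff:
  assumes a: "a \<in> PD_car Y" and b: "b \<in> PD_car Y" and "fst a = q" and "fst b = q"
  shows "q \<le> pre (PD Y) a b \<longleftrightarrow> (\<forall>y\<in>car Y. snd b () y \<le> snd a () y)"
proof
  have unit_mult: "qmult (rdiv (snd b () y) q) q = snd b () y" if "y \<in> car Y" for y
    using DQ_rdiv_cancel PD_car_DQ[OF b that] assms(4) by metis
  show "\<forall>y\<in>car Y. snd b () y \<le> snd a () y" if "q \<le> pre (PD Y) a b"
  proof
    fix y assume y: "y \<in> car Y"
    have "snd b () y = qmult (rdiv (snd b () y) q) q" using unit_mult y by simp
    also have "\<dots> \<le> qmult (rdiv (snd b () y) q) (pre (PD Y) a b)"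
      by (intro qmult_mono_right that)
    also have "\<dots> \<le> snd a () y" using PD_pre_le[OF a b y] assms(4) by simp
    finally show "snd b () y \<le> snd a () y" .
  qed
  show "q \<le> pre (PD Y) a b" if "\<forall>y\<in>car Y. snd b () y \<le> snd a () y"
    using that unit_mult DQ_refl[of q] assms(3,4) by (intro PD_pre_greatest[OF a b]) auto
qed

context
  fixes X :: "('a, 'q::quantale) qpos"
  assumes X: "qpreordered X"
begin

lemma pre_DQ: "x \<in> car X \<Longrightarrow> x' \<in> car X \<Longrightarrow> pre X x x' \<in> DQ (ext X x) (ext X x')"
  using X by (simp add: qpreordered_def qrel_def qs_def)

lemma pre_bot: "x \<notin> car X \<or> x' \<notin> car X \<Longrightarrow> pre X x x' = bot"
  using X by (simp add: qpreordered_def qrel_def qs_def)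

lemma pre_refl: "x \<in> car X \<Longrightarrow> ext X x \<le> pre X x x"
  using X unfolding qpreordered_def rle_def qs_def by (metis fst_conv qid_def snd_conv)

lemma pre_trans:
  assumes "x \<in> car X" and "x' \<in> car X" and "x'' \<in> car X"
  shows "qmult (rdiv (pre X x' x'') (ext X x')) (pre X x x') \<le> pre X x x''"
proof -
  have "qcomp (qs X) (pre X) (pre X) x x'' \<le> pre X x x''"
    using X assms by (simp add: qpreordered_def rle_def qs_def)
  then show ?thesis
    using assms(2) unfolding qcomp_def qs_def by (auto dest: order_trans[rotated] intro: Sup_upper)
qed

definition yoneda :: "'a \<Rightarrow> 'q \<times> ('a \<Rightarrow> unit \<Rightarrow> 'q)" where
  "yoneda = (\<lambda>x\<in>car X. (ext X x, \<lambda>x' _. pre X x' x))"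

definition coyoneda :: "'a \<Rightarrow> 'q \<times> (unit \<Rightarrow> 'a \<Rightarrow> 'q)" where
  "coyoneda = (\<lambda>x\<in>car X. (ext X x, \<lambda>_ x'. pre X x x'))"

lemma yoneda_eq: "x \<in> car X \<Longrightarrow> yoneda x = (ext X x, \<lambda>x' _. pre X x' x)"
  by (simp add: yoneda_def)

lemma coyoneda_eq: "x \<in> car X \<Longrightarrow> coyoneda x = (ext X x, \<lambda>_ x'. pre X x x')"
  by (simp add: coyoneda_def)

lemma yoneda_PP_car: "x \<in> car X \<Longrightarrow> yoneda x \<in> PP_car X"
  unfolding yoneda_eq by (rule PP_carI) (simp_all add: pre_DQ pre_bot pre_trans)

lemma coyoneda_PD_car: "x \<in> car X \<Longrightarrow> coyoneda x \<in> PD_car X"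
  unfolding coyoneda_eq by (rule PD_carI) (simp_all add: pre_DQ pre_bot pre_trans)

lemma le_pre_yoneda: "a \<in> PP_car X \<Longrightarrow> x \<in> car X \<Longrightarrow> snd a x () \<le> pre (PP X) (yoneda x) a"
  by (rule PP_pre_greatest[OF yoneda_PP_car]) (simp_all add: yoneda_eq PP_car_DQ PP_car_closed)

lemma le_pre_coyoneda: "b \<in> PD_car X \<Longrightarrow> x \<in> car X \<Longrightarrow> snd b () x \<le> pre (PD X) b (coyoneda x)"
  by (rule PD_pre_greatest[OF _ coyoneda_PD_car]) (simp_all add: coyoneda_eq PD_car_DQ PD_car_closed)

lemma pre_le_pre_yoneda:
  "x \<in> car X \<Longrightarrow> x' \<in> car X \<Longrightarrow> pre X x x' \<le> pre (PP X) (yoneda x) (yoneda x')"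
  by (rule PP_pre_greatest[OF yoneda_PP_car yoneda_PP_car]) (simp_all add: yoneda_eq pre_DQ pre_trans)

lemma pre_le_pre_coyoneda:
  "x \<in> car X \<Longrightarrow> x' \<in> car X \<Longrightarrow> pre X x x' \<le> pre (PD X) (coyoneda x) (coyoneda x')"
  by (rule PD_pre_greatest[OF coyoneda_PD_car coyoneda_PD_car]) (simp_all add: coyoneda_eq pre_DQ pre_trans)

lemma qmono_yoneda: "qmono X (PP X) yoneda"
  using yoneda_PP_car pre_le_pre_yoneda by (auto simp: qmono_def yoneda_def)

lemma qmono_coyoneda: "qmono X (PD X) coyoneda"
  using coyoneda_PD_car pre_le_pre_coyoneda by (auto simp: qmono_def coyoneda_def)

end

lemma qmono_compose: "qmono A B f \<Longrightarrow> qmono B C g \<Longrightarrow> qmono A C (compose (car A) g f)"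
proof -
  assume f: "qmono A B f" and g: "qmono B C g"
  have "pre A a a' \<le> pre C (g (f a)) (g (f a'))" if "a \<in> car A" "a' \<in> car A" for a a'
    using f g that unfolding qmono_def by (meson order_trans)
  then show ?thesis using f g by (auto simp: qmono_def compose_def)
qed

section \<open>Distributors as families of (co)presheaves\<close>

definition dist_to_PP :: "('a, 'q::quantale) qpos \<Rightarrow> ('b, 'q) qpos \<Rightarrow> ('a \<Rightarrow> 'b \<Rightarrow> 'q) \<Rightarrow>
    'b \<Rightarrow> 'q \<times> ('a \<Rightarrow> unit \<Rightarrow> 'q)" where
  "dist_to_PP X Y \<phi> = (\<lambda>y\<in>car Y. (ext Y y, \<lambda>x _. \<phi> x y))"

definition PP_to_dist :: "('a, 'q::quantale) qpos \<Rightarrow> ('b, 'q) qpos \<Rightarrow>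
    ('b \<Rightarrow> 'q \<times> ('a \<Rightarrow> unit \<Rightarrow> 'q)) \<Rightarrow> 'a \<Rightarrow> 'b \<Rightarrow> 'q" where
  "PP_to_dist X Y h = (\<lambda>x y. if y \<in> car Y then snd (h y) x () else bot)"

definition dist_to_PD :: "('a, 'q::quantale) qpos \<Rightarrow> ('b, 'q) qpos \<Rightarrow> ('a \<Rightarrow> 'b \<Rightarrow> 'q) \<Rightarrow>
    'a \<Rightarrow> 'q \<times> (unit \<Rightarrow> 'b \<Rightarrow> 'q)" where
  "dist_to_PD X Y \<phi> = (\<lambda>x\<in>car X. (ext X x, \<lambda>_ y. \<phi> x y))"

definition PD_to_dist :: "('a, 'q::quantale) qpos \<Rightarrow> ('b, 'q) qpos \<Rightarrow>
    ('a \<Rightarrow> 'q \<times> (unit \<Rightarrow> 'b \<Rightarrow> 'q)) \<Rightarrow> 'a \<Rightarrow> 'b \<Rightarrow> 'q" where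
  "PD_to_dist X Y h = (\<lambda>x y. if x \<in> car X then snd (h x) () y else bot)"

context
  fixes X :: "('a, 'q::quantale) qpos" and Y :: "('b, 'q) qpos"
  assumes X: "qpreordered X" and Y: "qpreordered Y"
begin

text \<open>By reflexivity of both preorders, the two-sided condition \<open>1_Y \<circ> \<phi> \<circ> 1_X \<le> \<phi>\<close> splits
  into the two one-sided ones.\<close>
lemma distributors_iff:
  "\<phi> \<in> distributors X Y \<longleftrightarrow> qrel (qs X) (qs Y) \<phi> \<and>
     (\<forall>x\<in>car X. \<forall>x'\<in>car X. \<forall>y\<in>car Y. qmult (rdiv (\<phi> x' y) (ext X x')) (pre X x x') \<le> \<phi> x y) \<and>
     (\<forall>x\<in>car X. \<forall>y\<in>car Y. \<forall>y'\<in>car Y. qmult (rdiv (pre Y y' y) (ext Y y')) (\<phi> x y') \<le> \<phi> x y)"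
    (is "_ \<longleftrightarrow> _ \<and> ?left \<and> ?right")
proof -
  define C where "C x y = Sup ((\<lambda>y'. qmult (rdiv (pre Y y' y) (ext Y y')) (\<phi> x y')) ` car Y)" for x y
  have C_upper: "qmult (rdiv (pre Y y' y) (ext Y y')) (\<phi> x y') \<le> C x y" if "y' \<in> car Y" for x y y'
    unfolding C_def using that by (auto intro: Sup_upper)
  have dist_iff: "\<phi> \<in> distributors X Y \<longleftrightarrow> qrel (qs X) (qs Y) \<phi> \<and>
     (\<forall>x\<in>car X. \<forall>y\<in>car Y. \<forall>x'\<in>car X. qmult (rdiv (C x' y) (ext X x')) (pre X x x') \<le> \<phi> x y)"
  proof -
    have "qcomp (qs Y) (pre Y) \<phi> = C"
      by (simp add: qcomp_def qs_def C_def fun_eq_iff)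
    then show ?thesis
      unfolding distributors_def mem_Collect_eq qdist_def
      by (simp add: rle_def qcomp_def qs_def SUP_le_iff)
  qed
  show ?thesis
  proof
    assume "\<phi> \<in> distributors X Y"
    then have r: "qrel (qs X) (qs Y) \<phi>"
      and le: "\<And>x y x'. x \<in> car X \<Longrightarrow> y \<in> car Y \<Longrightarrow> x' \<in> car X \<Longrightarrow>
                 qmult (rdiv (C x' y) (ext X x')) (pre X x x') \<le> \<phi> x y"
      using dist_iff by auto
    have phi_le_C: "\<phi> x y \<le> C x y" if "y \<in> car Y" for x y
      using C_upper[OF that] le_mult_rdiv[OF pre_refl[OF Y that]] order_trans by blast
    have ?left
      using le phi_le_C by (meson order_trans qmult_mono_left rdiv_mono)
    moreover have ?right
    proof (intro ballI)
      fix x y y' assume xy: "x \<in> car X" "y \<in> car Y" "y' \<in> car Y"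
      let ?t = "qmult (rdiv (pre Y y' y) (ext Y y')) (\<phi> x y')"
      have "\<phi> x y' = qmult (rdiv (\<phi> x y') (ext X x)) (ext X x)"
        using r xy by (metis qrel_qs DQ_rdiv_cancel)
      then have "?t = qmult (qmult (rdiv (pre Y y' y) (ext Y y')) (rdiv (\<phi> x y') (ext X x))) (ext X x)"
        by (metis qmult_assoc)
      then have "?t \<le> qmult (rdiv (C x y) (ext X x)) (ext X x)"
        using le_rdiv_mult_factor C_upper xy by blast
      also have "\<dots> \<le> qmult (rdiv (C x y) (ext X x)) (pre X x x)"
        by (intro qmult_mono_right pre_refl[OF X] xy)
      also have "\<dots> \<le> \<phi> x y" using le xy by blast
      finally show "?t \<le> \<phi> x y" .
    qed
    ultimately show "qrel (qs X) (qs Y) \<phi> \<and> ?left \<and> ?right" using r by blast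
  next
    assume h: "qrel (qs X) (qs Y) \<phi> \<and> ?left \<and> ?right"
    then have "C x y \<le> \<phi> x y" if "x \<in> car X" "y \<in> car Y" for x y
      using that unfolding C_def by (auto intro!: Sup_least)
    then have "qmult (rdiv (C x' y) (ext X x')) (pre X x x') \<le> \<phi> x y"
      if "x \<in> car X" "y \<in> car Y" "x' \<in> car X" for x y x'
      using h that by (meson order_trans qmult_mono_left rdiv_mono)
    then show "\<phi> \<in> distributors X Y" using h dist_iff by blast
  qed
qed

lemma distributor_DQ:
  "\<phi> \<in> distributors X Y \<Longrightarrow> x \<in> car X \<Longrightarrow> y \<in> car Y \<Longrightarrow> \<phi> x y \<in> DQ (ext X x) (ext Y y)"
  by (simp add: distributors_iff qrel_qs)

lemma distributor_bot: "\<phi> \<in> distributors X Y \<Longrightarrow> x \<notin> car X \<or> y \<notin> car Y \<Longrightarrow> \<phi> x y = bot"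
  by (simp add: distributors_iff qrel_qs)

lemma distributor_pre_left:
  "\<phi> \<in> distributors X Y \<Longrightarrow> x \<in> car X \<Longrightarrow> x' \<in> car X \<Longrightarrow> y \<in> car Y \<Longrightarrow>
   qmult (rdiv (\<phi> x' y) (ext X x')) (pre X x x') \<le> \<phi> x y"
  by (simp add: distributors_iff)

lemma distributor_pre_right:
  "\<phi> \<in> distributors X Y \<Longrightarrow> x \<in> car X \<Longrightarrow> y \<in> car Y \<Longrightarrow> y' \<in> car Y \<Longrightarrow>
   qmult (rdiv (pre Y y' y) (ext Y y')) (\<phi> x y') \<le> \<phi> x y"
  by (simp add: distributors_iff)

lemma distributorI:
  assumes "\<And>x y. x \<in> car X \<Longrightarrow> y \<in> car Y \<Longrightarrow> \<phi> x y \<in> DQ (ext X x) (ext Y y)"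
    and "\<And>x y. x \<notin> car X \<or> y \<notin> car Y \<Longrightarrow> \<phi> x y = bot"
    and "\<And>x x' y. x \<in> car X \<Longrightarrow> x' \<in> car X \<Longrightarrow> y \<in> car Y \<Longrightarrow>
           qmult (rdiv (\<phi> x' y) (ext X x')) (pre X x x') \<le> \<phi> x y"
    and "\<And>x y y'. x \<in> car X \<Longrightarrow> y \<in> car Y \<Longrightarrow> y' \<in> car Y \<Longrightarrow>
           qmult (rdiv (pre Y y' y) (ext Y y')) (\<phi> x y') \<le> \<phi> x y"
  shows "\<phi> \<in> distributors X Y"
  using assms by (simp add: distributors_iff qrel_qs)


lemma dist_to_PP_qmaps:
  assumes \<phi>: "\<phi> \<in> distributors X Y"
  shows "dist_to_PP X Y \<phi> \<in> qmaps Y (PP X)"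
proof -
  have mem: "dist_to_PP X Y \<phi> y \<in> PP_car X" if "y \<in> car Y" for y
    using that distributor_DQ[OF \<phi>] distributor_bot[OF \<phi>] distributor_pre_left[OF \<phi>]
    by (auto simp: dist_to_PP_def intro!: PP_carI)
  have "pre Y y y' \<le> pre (PP X) (dist_to_PP X Y \<phi> y) (dist_to_PP X Y \<phi> y')"
    if "y \<in> car Y" "y' \<in> car Y" for y y'
    using that mem pre_DQ[OF Y] distributor_pre_right[OF \<phi>]
    by (intro PP_pre_greatest) (auto simp: dist_to_PP_def)
  then show ?thesis
    using mem by (auto simp: qmaps_def qmono_def dist_to_PP_def)
qed

lemma dist_to_PD_qmaps:
  assumes \<phi>: "\<phi> \<in> distributors X Y"
  shows "dist_to_PD X Y \<phi> \<in> qmaps X (PD Y)"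
proof -
  have mem: "dist_to_PD X Y \<phi> x \<in> PD_car Y" if "x \<in> car X" for x
    using that distributor_DQ[OF \<phi>] distributor_bot[OF \<phi>] distributor_pre_right[OF \<phi>]
    by (auto simp: dist_to_PD_def intro!: PD_carI)
  have "pre X x x' \<le> pre (PD Y) (dist_to_PD X Y \<phi> x) (dist_to_PD X Y \<phi> x')"
    if "x \<in> car X" "x' \<in> car X" for x x'
    using that mem pre_DQ[OF X] distributor_pre_left[OF \<phi>]
    by (intro PD_pre_greatest) (auto simp: dist_to_PD_def)
  then show ?thesis
    using mem by (auto simp: qmaps_def qmono_def dist_to_PD_def)
qed

lemma PP_to_dist_distributors:
  assumes "h \<in> qmaps Y (PP X)"
  shows "PP_to_dist X Y h \<in> distributors X Y"
proof -
  have h: "qmono Y (PP X) h" using assms by (simp add: qmaps_def)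
  have hy: "h y \<in> PP_car X" "fst (h y) = ext Y y" if "y \<in> car Y" for y
    using h that by (simp_all add: qmono_def)
  show ?thesis
  proof (rule distributorI)
    fix x y assume "x \<in> car X" "y \<in> car Y"
    then show "PP_to_dist X Y h x y \<in> DQ (ext X x) (ext Y y)"
      using PP_car_DQ[OF hy(1)] hy(2) by (simp add: PP_to_dist_def)
  next
    fix x y assume "x \<notin> car X \<or> y \<notin> car Y"
    then show "PP_to_dist X Y h x y = bot"
      by (auto simp: PP_to_dist_def PP_car_bot[OF hy(1)])
  next
    fix x x' y assume "x \<in> car X" "x' \<in> car X" "y \<in> car Y"
    then show "qmult (rdiv (PP_to_dist X Y h x' y) (ext X x')) (pre X x x') \<le> PP_to_dist X Y h x y"
      using PP_car_closed[OF hy(1)] by (simp add: PP_to_dist_def)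
  next
    fix x y y' assume xy: "x \<in> car X" "y \<in> car Y" "y' \<in> car Y"
    have "pre Y y' y \<le> pre (PP X) (h y') (h y)"
      using h xy by (simp add: qmono_def)
    then have "qmult (rdiv (pre Y y' y) (ext Y y')) (snd (h y') x ())
        \<le> qmult (rdiv (pre (PP X) (h y') (h y)) (fst (h y'))) (snd (h y') x ())"
      using hy xy by (simp add: qmult_mono_left rdiv_mono)
    also have "\<dots> \<le> snd (h y) x ()"
      by (rule PP_pre_le[OF hy(1)[OF xy(3)] hy(1)[OF xy(2)] xy(1)])
    finally show "qmult (rdiv (pre Y y' y) (ext Y y')) (PP_to_dist X Y h x y') \<le> PP_to_dist X Y h x y"
      using xy by (simp add: PP_to_dist_def)
  qed
qed

lemma PD_to_dist_distributors:
  assumes "h \<in> qmaps X (PD Y)"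
  shows "PD_to_dist X Y h \<in> distributors X Y"
proof -
  have h: "qmono X (PD Y) h" using assms by (simp add: qmaps_def)
  have hx: "h x \<in> PD_car Y" "fst (h x) = ext X x" if "x \<in> car X" for x
    using h that by (simp_all add: qmono_def)
  show ?thesis
  proof (rule distributorI)
    fix x y assume "x \<in> car X" "y \<in> car Y"
    then show "PD_to_dist X Y h x y \<in> DQ (ext X x) (ext Y y)"
      using PD_car_DQ[OF hx(1)] hx(2) by (simp add: PD_to_dist_def)
  next
    fix x y assume "x \<notin> car X \<or> y \<notin> car Y"
    then show "PD_to_dist X Y h x y = bot"
      by (auto simp: PD_to_dist_def PD_car_bot[OF hx(1)])
  next
    fix x y y' assume "x \<in> car X" "y \<in> car Y" "y' \<in> car Y"
    then show "qmult (rdiv (pre Y y' y) (ext Y y')) (PD_to_dist X Y h x y') \<le> PD_to_dist X Y h x y"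
      using PD_car_closed[OF hx(1)] by (simp add: PD_to_dist_def)
  next
    fix x x' y assume xy: "x \<in> car X" "x' \<in> car X" "y \<in> car Y"
    have "pre X x x' \<le> pre (PD Y) (h x) (h x')"
      using h xy by (simp add: qmono_def)
    then have "qmult (rdiv (snd (h x') () y) (ext X x')) (pre X x x')
        \<le> qmult (rdiv (snd (h x') () y) (fst (h x'))) (pre (PD Y) (h x) (h x'))"
      using hx xy by (simp add: qmult_mono_right)
    also have "\<dots> \<le> snd (h x) () y"
      by (rule PD_pre_le[OF hx(1)[OF xy(1)] hx(1)[OF xy(2)] xy(3)])
    finally show "qmult (rdiv (PD_to_dist X Y h x' y) (ext X x')) (pre X x x') \<le> PD_to_dist X Y h x y"
      using xy by (simp add: PD_to_dist_def)
  qed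
qed

lemma PP_to_dist_dist_to_PP:
  assumes "\<phi> \<in> distributors X Y"
  shows "PP_to_dist X Y (dist_to_PP X Y \<phi>) = \<phi>"
proof (intro ext)
  fix x y show "PP_to_dist X Y (dist_to_PP X Y \<phi>) x y = \<phi> x y"
    using distributor_bot[OF assms, of x y]
    by (cases "y \<in> car Y") (simp_all add: PP_to_dist_def dist_to_PP_def)
qed

lemma PD_to_dist_dist_to_PD:
  assumes "\<phi> \<in> distributors X Y"
  shows "PD_to_dist X Y (dist_to_PD X Y \<phi>) = \<phi>"
proof (intro ext)
  fix x y show "PD_to_dist X Y (dist_to_PD X Y \<phi>) x y = \<phi> x y"
    using distributor_bot[OF assms, of x y]
    by (cases "x \<in> car X") (simp_all add: PD_to_dist_def dist_to_PD_def)
qed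

lemma dist_to_PP_PP_to_dist:
  assumes "h \<in> qmaps Y (PP X)"
  shows "dist_to_PP X Y (PP_to_dist X Y h) = h"
proof
  fix y show "dist_to_PP X Y (PP_to_dist X Y h) y = h y"
  proof (cases "y \<in> car Y")
    case True
    then have "fst (h y) = ext Y y" using assms by (simp add: qmaps_def qmono_def)
    with True show ?thesis by (cases "h y") (auto simp: dist_to_PP_def PP_to_dist_def)
  next
    case False
    then show ?thesis using assms by (simp add: qmaps_def qmono_def dist_to_PP_def)
  qed
qed

lemma dist_to_PD_PD_to_dist:
  assumes "h \<in> qmaps X (PD Y)"
  shows "dist_to_PD X Y (PD_to_dist X Y h) = h"
proof
  fix x show "dist_to_PD X Y (PD_to_dist X Y h) x = h x"
  proof (cases "x \<in> car X")
    case True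
    then have "fst (h x) = ext X x" using assms by (simp add: qmaps_def qmono_def)
    with True show ?thesis by (cases "h x") (auto simp: dist_to_PD_def PD_to_dist_def)
  next
    case False
    then show ?thesis using assms by (simp add: qmaps_def qmono_def dist_to_PD_def)
  qed
qed

lemma bij_betw_dist_to_PP: "bij_betw (dist_to_PP X Y) (distributors X Y) (qmaps Y (PP X))"
  by (rule bij_betw_byWitness[where f' = "PP_to_dist X Y"])
    (simp_all add: PP_to_dist_dist_to_PP dist_to_PP_PP_to_dist dist_to_PP_qmaps PP_to_dist_distributors
      image_subsetI)

lemma bij_betw_dist_to_PD: "bij_betw (dist_to_PD X Y) (distributors X Y) (qmaps X (PD Y))"
  by (rule bij_betw_byWitness[where f' = "PD_to_dist X Y"])
    (simp_all add: PD_to_dist_dist_to_PD dist_to_PD_PD_to_dist dist_to_PD_qmaps PD_to_dist_distributors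
      image_subsetI)

end

locale qgalois_pair =
  fixes A :: "('a, 'q::quantale) qpos" and B :: "('b, 'q) qpos" and f g
  assumes galois: "qgalois A B f g"
begin

lemma f_qmono: "qmono A B f" and g_qmono: "qmono B A g"
  using galois by (simp_all add: qgalois_def)

lemma f_car: "a \<in> car A \<Longrightarrow> f a \<in> car B" and ext_f: "a \<in> car A \<Longrightarrow> ext B (f a) = ext A a"
  and f_pre: "a \<in> car A \<Longrightarrow> a' \<in> car A \<Longrightarrow> pre A a a' \<le> pre B (f a) (f a')"
  and f_undefined: "a \<notin> car A \<Longrightarrow> f a = undefined"
  using f_qmono by (simp_all add: qmono_def)

lemma g_car: "b \<in> car B \<Longrightarrow> g b \<in> car A" and ext_g: "b \<in> car B \<Longrightarrow> ext A (g b) = ext B b"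
  and g_pre: "b \<in> car B \<Longrightarrow> b' \<in> car B \<Longrightarrow> pre B b b' \<le> pre A (g b) (g b')"
  and g_undefined: "b \<notin> car B \<Longrightarrow> g b = undefined"
  using g_qmono by (simp_all add: qmono_def)

lemma unit_pre: "a \<in> car A \<Longrightarrow> ext A a \<le> pre A a (g (f a))"
  and counit_pre: "b \<in> car B \<Longrightarrow> ext B b \<le> pre B (f (g b)) b"
  using galois by (simp_all add: qgalois_def)

end

section \<open>Polarities\<close>

text \<open>\<open>pol_up X Y \<phi> \<mu> = \<phi> \<swarrow> \<mu>\<close> and \<open>pol_down X Y \<phi> \<lambda> = \<lambda> \<searrow> \<phi>\<close>.\<close>
definition pol_up :: "('a, 'q::quantale) qpos \<Rightarrow> ('b, 'q) qpos \<Rightarrow> ('a \<Rightarrow> 'b \<Rightarrow> 'q) \<Rightarrow>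
    'q \<times> ('a \<Rightarrow> unit \<Rightarrow> 'q) \<Rightarrow> 'q \<times> (unit \<Rightarrow> 'b \<Rightarrow> 'q)" where
  "pol_up X Y \<phi> = (\<lambda>a\<in>PP_car X. (fst a, \<lambda>_ y. if y \<in> car Y
     then dq_rimp (fst a) (ext Y y) (car X) (\<lambda>x. snd a x ()) (\<lambda>x. \<phi> x y) else bot))"

definition pol_down :: "('a, 'q::quantale) qpos \<Rightarrow> ('b, 'q) qpos \<Rightarrow> ('a \<Rightarrow> 'b \<Rightarrow> 'q) \<Rightarrow>
    'q \<times> (unit \<Rightarrow> 'b \<Rightarrow> 'q) \<Rightarrow> 'q \<times> ('a \<Rightarrow> unit \<Rightarrow> 'q)" where
  "pol_down X Y \<phi> = (\<lambda>b\<in>PD_car Y. (fst b, \<lambda>x _. if x \<in> car X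
     then dq_limp (ext X x) (fst b) (car Y) (\<lambda>y. rdiv (snd b () y) (fst b)) (\<lambda>y. \<phi> x y) else bot))"

lemma fst_pol_up [simp]: "a \<in> PP_car X \<Longrightarrow> fst (pol_up X Y \<phi> a) = fst a"
  by (simp add: pol_up_def)

lemma fst_pol_down [simp]: "b \<in> PD_car Y \<Longrightarrow> fst (pol_down X Y \<phi> b) = fst b"
  by (simp add: pol_down_def)

lemma pol_up_DQ:
  "a \<in> PP_car X \<Longrightarrow> y \<in> car Y \<Longrightarrow> snd (pol_up X Y \<phi> a) () y \<in> DQ (fst a) (ext Y y)"
  by (simp add: pol_up_def dq_rimp_DQ)

lemma pol_up_le:
  "a \<in> PP_car X \<Longrightarrow> x \<in> car X \<Longrightarrow> y \<in> car Y \<Longrightarrow>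
   qmult (rdiv (snd (pol_up X Y \<phi> a) () y) (fst a)) (snd a x ()) \<le> \<phi> x y"
  unfolding pol_up_def by (simp, rule dq_rimp_le) (auto intro: DQ_ldiv_cancel PP_car_DQ)

lemma pol_up_greatest:
  "a \<in> PP_car X \<Longrightarrow> y \<in> car Y \<Longrightarrow> v \<in> DQ (fst a) (ext Y y) \<Longrightarrow>
   (\<And>x. x \<in> car X \<Longrightarrow> qmult (rdiv v (fst a)) (snd a x ()) \<le> \<phi> x y) \<Longrightarrow>
   v \<le> snd (pol_up X Y \<phi> a) () y"
  unfolding pol_up_def by (simp add: dq_rimp_greatest)

lemma pol_down_DQ:
  "b \<in> PD_car Y \<Longrightarrow> x \<in> car X \<Longrightarrow> snd (pol_down X Y \<phi> b) x () \<in> DQ (ext X x) (fst b)"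
  by (simp add: pol_down_def dq_limp_DQ)

lemma pol_down_le:
  "b \<in> PD_car Y \<Longrightarrow> x \<in> car X \<Longrightarrow> y \<in> car Y \<Longrightarrow>
   qmult (rdiv (snd b () y) (fst b)) (snd (pol_down X Y \<phi> b) x ()) \<le> \<phi> x y"
  unfolding pol_down_def by (simp, rule dq_limp_le)

lemma pol_down_greatest:
  "b \<in> PD_car Y \<Longrightarrow> x \<in> car X \<Longrightarrow> u \<in> DQ (ext X x) (fst b) \<Longrightarrow>
   (\<And>y. y \<in> car Y \<Longrightarrow> qmult (rdiv (snd b () y) (fst b)) u \<le> \<phi> x y) \<Longrightarrow>
   u \<le> snd (pol_down X Y \<phi> b) x ()"
  unfolding pol_down_def by (simp add: dq_limp_greatest)

context
  fixes X :: "('a, 'q::quantale) qpos" and Y :: "('b, 'q) qpos" and \<phi>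
  assumes X: "qpreordered X" and Y: "qpreordered Y" and \<phi>: "\<phi> \<in> distributors X Y"
begin

lemma pol_up_PD_car:
  assumes a: "a \<in> PP_car X"
  shows "pol_up X Y \<phi> a \<in> PD_car Y"
proof -
  have "(fst a, snd (pol_up X Y \<phi> a)) \<in> PD_car Y"
  proof (rule PD_carI)
    fix y y' assume y: "y \<in> car Y" "y' \<in> car Y"
    let ?P = "rdiv (pre Y y' y) (ext Y y')" and ?w = "snd (pol_up X Y \<phi> a) () y'"
    have w: "?w \<in> DQ (fst a) (ext Y y')" by (rule pol_up_DQ[OF a y(2)])
    show "qmult ?P ?w \<le> snd (pol_up X Y \<phi> a) () y"
    proof (rule pol_up_greatest[OF a y(1) DQ_comp[OF pre_DQ[OF Y y(2,1)] w]])
      fix x assume x: "x \<in> car X"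
      have "qmult (rdiv (qmult ?P ?w) (fst a)) (snd a x ()) = qmult ?P (qmult (rdiv ?w (fst a)) (snd a x ()))"
        by (rule rdiv_mult_assoc[OF DQ_rdiv_cancel[OF w] DQ_ldiv_cancel[OF PP_car_DQ[OF a x]]])
      also have "\<dots> \<le> qmult ?P (\<phi> x y')" by (rule qmult_mono_right[OF pol_up_le[OF a x y(2)]])
      also have "\<dots> \<le> \<phi> x y" by (rule distributor_pre_right[OF X Y \<phi> x y])
      finally show "qmult (rdiv (qmult ?P ?w) (fst a)) (snd a x ()) \<le> \<phi> x y" .
    qed
  qed (use a in \<open>simp_all add: pol_up_def dq_rimp_DQ\<close>)
  then show ?thesis using a by (simp add: pol_up_def)
qed

lemma pol_down_PP_car:
  assumes b: "b \<in> PD_car Y"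
  shows "pol_down X Y \<phi> b \<in> PP_car X"
proof -
  have "(fst b, snd (pol_down X Y \<phi> b)) \<in> PP_car X"
  proof (rule PP_carI)
    fix x x' assume x: "x \<in> car X" "x' \<in> car X"
    let ?c = "qmult (rdiv (snd (pol_down X Y \<phi> b) x' ()) (ext X x')) (pre X x x')"
    show "?c \<le> snd (pol_down X Y \<phi> b) x ()"
    proof (rule pol_down_greatest[OF b x(1) DQ_comp[OF pol_down_DQ[OF b x(2)] pre_DQ[OF X x]]])
      fix y assume y: "y \<in> car Y"
      have "qmult (rdiv (snd b () y) (fst b)) ?c \<le>
         qmult (rdiv (qmult (rdiv (snd b () y) (fst b)) (snd (pol_down X Y \<phi> b) x' ())) (ext X x')) (pre X x x')"
        unfolding qmult_assoc[symmetric] by (intro qmult_mono_left mult_rdiv_le_rdiv_mult)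
      also have "\<dots> \<le> qmult (rdiv (\<phi> x' y) (ext X x')) (pre X x x')"
        by (intro qmult_mono_left rdiv_mono pol_down_le[OF b x(2) y])
      also have "\<dots> \<le> \<phi> x y" by (rule distributor_pre_left[OF X Y \<phi> x y])
      finally show "qmult (rdiv (snd b () y) (fst b)) ?c \<le> \<phi> x y" .
    qed
  qed (use b in \<open>simp_all add: pol_down_def dq_limp_DQ\<close>)
  then show ?thesis using b by (simp add: pol_down_def)
qed


lemma pre_le_pre_pol_up:
  assumes a: "a \<in> PP_car X" and a': "a' \<in> PP_car X"
  shows "pre (PP X) a a' \<le> pre (PD Y) (pol_up X Y \<phi> a) (pol_up X Y \<phi> a')"
proof (rule PD_pre_greatest[OF pol_up_PD_car[OF a] pol_up_PD_car[OF a']])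
  let ?w = "pre (PP X) a a'"
  have w: "?w \<in> DQ (fst a) (fst a')" by (rule PP_pre_DQ[OF a a'])
  then show "?w \<in> DQ (fst (pol_up X Y \<phi> a)) (fst (pol_up X Y \<phi> a'))" using a a' by simp
next
  fix y assume y: "y \<in> car Y"
  let ?w = "pre (PP X) a a'" and ?U = "rdiv (snd (pol_up X Y \<phi> a') () y) (fst a')"
  have w: "?w \<in> DQ (fst a) (fst a')" by (rule PP_pre_DQ[OF a a'])
  have "qmult ?U ?w \<le> snd (pol_up X Y \<phi> a) () y"
  proof (rule pol_up_greatest[OF a y DQ_comp[OF pol_up_DQ[OF a' y] w]])
    fix x assume x: "x \<in> car X"
    have "qmult (rdiv (qmult ?U ?w) (fst a)) (snd a x ()) = qmult ?U (qmult (rdiv ?w (fst a)) (snd a x ()))"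
      by (rule rdiv_mult_assoc[OF DQ_rdiv_cancel[OF w] DQ_ldiv_cancel[OF PP_car_DQ[OF a x]]])
    also have "\<dots> \<le> qmult ?U (snd a' x ())" by (rule qmult_mono_right[OF PP_pre_le[OF a a' x]])
    also have "\<dots> \<le> \<phi> x y" by (rule pol_up_le[OF a' x y])
    finally show "qmult (rdiv (qmult ?U ?w) (fst a)) (snd a x ()) \<le> \<phi> x y" .
  qed
  then show "qmult (rdiv (snd (pol_up X Y \<phi> a') () y) (fst (pol_up X Y \<phi> a'))) ?w
      \<le> snd (pol_up X Y \<phi> a) () y"
    using a' by simp
qed

lemma pre_le_pre_pol_down:
  assumes b: "b \<in> PD_car Y" and b': "b' \<in> PD_car Y"
  shows "pre (PD Y) b b' \<le> pre (PP X) (pol_down X Y \<phi> b) (pol_down X Y \<phi> b')"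
proof (rule PP_pre_greatest[OF pol_down_PP_car[OF b] pol_down_PP_car[OF b']])
  let ?w = "pre (PD Y) b b'"
  have w: "?w \<in> DQ (fst b) (fst b')" by (rule PD_pre_DQ[OF b b'])
  then show "?w \<in> DQ (fst (pol_down X Y \<phi> b)) (fst (pol_down X Y \<phi> b'))" using b b' by simp
next
  fix x assume x: "x \<in> car X"
  let ?w = "pre (PD Y) b b'"
  let ?c = "qmult (rdiv ?w (fst b)) (snd (pol_down X Y \<phi> b) x ())"
  have w: "?w \<in> DQ (fst b) (fst b')" by (rule PD_pre_DQ[OF b b'])
  have "?c \<le> snd (pol_down X Y \<phi> b') x ()"
  proof (rule pol_down_greatest[OF b' x DQ_comp[OF w pol_down_DQ[OF b x]]])
    fix y assume y: "y \<in> car Y"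
    have "qmult (rdiv (snd b' () y) (fst b')) ?c \<le>
        qmult (rdiv (qmult (rdiv (snd b' () y) (fst b')) ?w) (fst b)) (snd (pol_down X Y \<phi> b) x ())"
      unfolding qmult_assoc[symmetric] by (intro qmult_mono_left mult_rdiv_le_rdiv_mult)
    also have "\<dots> \<le> qmult (rdiv (snd b () y) (fst b)) (snd (pol_down X Y \<phi> b) x ())"
      by (intro qmult_mono_left rdiv_mono PD_pre_le[OF b b' y])
    also have "\<dots> \<le> \<phi> x y" by (rule pol_down_le[OF b x y])
    finally show "qmult (rdiv (snd b' () y) (fst b')) ?c \<le> \<phi> x y" .
  qed
  then show "qmult (rdiv ?w (fst (pol_down X Y \<phi> b))) (snd (pol_down X Y \<phi> b) x ())
      \<le> snd (pol_down X Y \<phi> b') x ()"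
    using b by simp
qed

lemma qgalois_pol: "qgalois (PP X) (PD Y) (pol_up X Y \<phi>) (pol_down X Y \<phi>)"
  unfolding qgalois_def
proof (intro conjI ballI)
  show "qmono (PP X) (PD Y) (pol_up X Y \<phi>)"
    by (simp add: qmono_def pol_up_PD_car pre_le_pre_pol_up) (simp add: pol_up_def)
  show "qmono (PD Y) (PP X) (pol_down X Y \<phi>)"
    by (simp add: qmono_def pol_down_PP_car pre_le_pre_pol_down) (simp add: pol_down_def)
next
  fix a assume "a \<in> car (PP X)"
  then have a: "a \<in> PP_car X" by simp
  have b: "pol_up X Y \<phi> a \<in> PD_car Y" by (rule pol_up_PD_car[OF a])
  have "snd a x () \<le> snd (pol_down X Y \<phi> (pol_up X Y \<phi> a)) x ()" if x: "x \<in> car X" for x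
    using PP_car_DQ[OF a x] pol_up_le[OF a x] a
    by (intro pol_down_greatest[OF b x]) simp_all
  then show "ext (PP X) a \<le> pre (PP X) a (pol_down X Y \<phi> (pol_up X Y \<phi> a))"
    using PP_extent_le_pre_iff[OF a pol_down_PP_car[OF b] refl] a b by simp
next
  fix b assume "b \<in> car (PD Y)"
  then have b: "b \<in> PD_car Y" by simp
  have a: "pol_down X Y \<phi> b \<in> PP_car X" by (rule pol_down_PP_car[OF b])
  have "snd b () y \<le> snd (pol_up X Y \<phi> (pol_down X Y \<phi> b)) () y" if y: "y \<in> car Y" for y
    using PD_car_DQ[OF b y] pol_down_le[OF b _ y] b
    by (intro pol_up_greatest[OF a y]) simp_all
  then show "ext (PD Y) b \<le> pre (PD Y) (pol_up X Y \<phi> (pol_down X Y \<phi> b)) b"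
    using PD_extent_le_pre_iff[OF pol_up_PD_car[OF a] b _ refl] a b by simp
qed

lemma pol_up_yoneda:
  assumes x: "x \<in> car X"
  shows "pol_up X Y \<phi> (yoneda X x) = dist_to_PD X Y \<phi> x"
proof (rule PD_eqI)
  have yx: "yoneda X x \<in> PP_car X" by (rule yoneda_PP_car[OF X x])
  show "pol_up X Y \<phi> (yoneda X x) \<in> PD_car Y" by (rule pol_up_PD_car[OF yx])
  show "dist_to_PD X Y \<phi> x \<in> PD_car Y"
    using dist_to_PD_qmaps[OF X Y \<phi>] x by (simp add: qmaps_def qmono_def)
  show "fst (pol_up X Y \<phi> (yoneda X x)) = fst (dist_to_PD X Y \<phi> x)"
    using yx x by (simp add: yoneda_eq[OF X x] dist_to_PD_def)
  fix y assume y: "y \<in> car Y"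
  let ?v = "snd (pol_up X Y \<phi> (yoneda X x)) () y"
  have "?v \<le> qmult (rdiv ?v (ext X x)) (pre X x x)"
    using pol_up_DQ[OF yx y] pre_refl[OF X x] by (intro DQ_le_mult_rdiv) (simp_all add: yoneda_eq[OF X x])
  also have "\<dots> \<le> \<phi> x y" using pol_up_le[OF yx x y] by (simp add: yoneda_eq[OF X x])
  finally have "?v \<le> \<phi> x y" .
  moreover have "\<phi> x y \<le> ?v"
    using distributor_DQ[OF X Y \<phi> x y] distributor_pre_left[OF X Y \<phi> _ x y]
    by (intro pol_up_greatest[OF yx y]) (simp_all add: yoneda_eq[OF X x])
  ultimately show "?v = snd (dist_to_PD X Y \<phi> x) () y" using x by (simp add: dist_to_PD_def)
qed

lemma pol_down_coyoneda:
  assumes x: "x \<in> car X" and y: "y \<in> car Y"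
  shows "snd (pol_down X Y \<phi> (coyoneda Y y)) x () = \<phi> x y"
proof (rule antisym)
  have cy: "coyoneda Y y \<in> PD_car Y" by (rule coyoneda_PD_car[OF Y y])
  let ?u = "snd (pol_down X Y \<phi> (coyoneda Y y)) x ()"
  have "?u \<le> qmult (rdiv (pre Y y y) (ext Y y)) ?u"
    by (rule le_mult_rdiv[OF pre_refl[OF Y y]])
  also have "\<dots> \<le> \<phi> x y" using pol_down_le[OF cy x y] by (simp add: coyoneda_eq[OF Y y])
  finally show "?u \<le> \<phi> x y" .
  show "\<phi> x y \<le> ?u"
    using distributor_DQ[OF X Y \<phi> x y] distributor_pre_right[OF X Y \<phi> x _ y]
    by (intro pol_down_greatest[OF cy x]) (simp_all add: coyoneda_eq[OF Y y])
qed

lemma PD_to_dist_pol_up_yoneda: "PD_to_dist X Y (compose (car X) (pol_up X Y \<phi>) (yoneda X)) = \<phi>"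
proof -
  have "compose (car X) (pol_up X Y \<phi>) (yoneda X) = dist_to_PD X Y \<phi>"
    by (rule ext) (simp add: compose_def pol_up_yoneda dist_to_PD_def)
  then show ?thesis using PD_to_dist_dist_to_PD[OF X Y \<phi>] by simp
qed

end

locale polarity = qgalois_pair "PP X" "PD Y" f g
  for X :: "('a, 'q::quantale) qpos" and Y :: "('b, 'q) qpos" and f g +
  assumes X: "qpreordered X" and Y: "qpreordered Y"
begin

lemma f_PD_car: "a \<in> PP_car X \<Longrightarrow> f a \<in> PD_car Y" and fst_f: "a \<in> PP_car X \<Longrightarrow> fst (f a) = fst a"
  and g_PP_car: "b \<in> PD_car Y \<Longrightarrow> g b \<in> PP_car X" and fst_g: "b \<in> PD_car Y \<Longrightarrow> fst (g b) = fst b"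
  using f_car ext_f g_car ext_g by simp_all

lemma f_pre_le: "a \<in> PP_car X \<Longrightarrow> a' \<in> PP_car X \<Longrightarrow> pre (PP X) a a' \<le> pre (PD Y) (f a) (f a')"
  and g_pre_le: "b \<in> PD_car Y \<Longrightarrow> b' \<in> PD_car Y \<Longrightarrow> pre (PD Y) b b' \<le> pre (PP X) (g b) (g b')"
  using f_pre g_pre by simp_all

lemma unit_le: "a \<in> PP_car X \<Longrightarrow> x \<in> car X \<Longrightarrow> snd a x () \<le> snd (g (f a)) x ()"
  using unit_pre PP_extent_le_pre_iff[OF _ g_PP_car[OF f_PD_car] refl] by (simp add: fst_f fst_g f_PD_car)

lemma counit_le: "b \<in> PD_car Y \<Longrightarrow> y \<in> car Y \<Longrightarrow> snd b () y \<le> snd (f (g b)) () y"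
  using counit_pre PD_extent_le_pre_iff[OF f_PD_car[OF g_PP_car] _ _ refl] by (simp add: fst_f fst_g g_PP_car)

definition \<phi> :: "'a \<Rightarrow> 'b \<Rightarrow> 'q" where
  "\<phi> = PD_to_dist X Y (compose (car X) f (yoneda X))"

lemma \<phi>_distributor: "\<phi> \<in> distributors X Y"
  unfolding \<phi>_def
  by (rule PD_to_dist_distributors[OF X Y]) (simp add: qmaps_def qmono_compose[OF qmono_yoneda[OF X] f_qmono])

lemma \<phi>_eq: "x \<in> car X \<Longrightarrow> \<phi> x y = snd (f (yoneda X x)) () y"
  by (simp add: \<phi>_def PD_to_dist_def compose_def)

lemma f_yoneda: "x \<in> car X \<Longrightarrow> f (yoneda X x) \<in> PD_car Y"
  and fst_f_yoneda: "x \<in> car X \<Longrightarrow> fst (f (yoneda X x)) = ext X x"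
  using f_PD_car fst_f yoneda_PP_car[OF X] by (simp_all add: yoneda_eq[OF X])

lemma g_eq:
  assumes b: "b \<in> PD_car Y" and x: "x \<in> car X"
  shows "snd (g b) x () = snd (pol_down X Y \<phi> b) x ()"
proof (rule antisym)
  let ?u = "snd (g b) x ()" and ?fy = "f (yoneda X x)"
  have gb: "g b \<in> PP_car X" "fst (g b) = fst b" using g_PP_car[OF b] fst_g[OF b] .
  show "?u \<le> snd (pol_down X Y \<phi> b) x ()"
  proof (rule pol_down_greatest[OF b x])
    show "?u \<in> DQ (ext X x) (fst b)" using PP_car_DQ[OF gb(1) x] gb(2) by simp
  next
    fix y assume y: "y \<in> car Y"
    have u_le: "?u \<le> pre (PD Y) ?fy (f (g b))"
      using le_pre_yoneda[OF X gb(1) x] f_pre_le[OF yoneda_PP_car[OF X x] gb(1)] by (rule order_trans)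
    have "qmult (rdiv (snd b () y) (fst b)) ?u
        \<le> qmult (rdiv (snd (f (g b)) () y) (fst (f (g b)))) (pre (PD Y) ?fy (f (g b)))"
      using qmult_mono[OF rdiv_mono[OF counit_le[OF b y]] u_le] fst_f[OF gb(1)] gb(2) by simp
    also have "\<dots> \<le> snd ?fy () y" by (rule PD_pre_le[OF f_yoneda[OF x] f_PD_car[OF gb(1)] y])
    finally show "qmult (rdiv (snd b () y) (fst b)) ?u \<le> \<phi> x y" using \<phi>_eq[OF x] by simp
  qed
  let ?v = "snd (pol_down X Y \<phi> b) x ()" and ?gfy = "g (f (yoneda X x))"
  have v: "?v \<in> DQ (ext X x) (fst b)" by (rule pol_down_DQ[OF b x])
  have "?v \<le> pre (PD Y) ?fy b"
    using v fst_f_yoneda[OF x] pol_down_le[where \<phi> = \<phi>, OF b x] \<phi>_eq[OF x]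
    by (intro PD_pre_greatest[OF f_yoneda[OF x] b]) simp_all
  also have "\<dots> \<le> pre (PP X) ?gfy (g b)" by (rule g_pre_le[OF f_yoneda[OF x] b])
  finally have vle: "?v \<le> pre (PP X) ?gfy (g b)" .
  have gf: "?gfy \<in> PP_car X" "fst ?gfy = ext X x"
    using g_PP_car[OF f_yoneda[OF x]] fst_g[OF f_yoneda[OF x]] fst_f_yoneda[OF x] by simp_all
  have "ext X x \<le> snd ?gfy x ()"
    using pre_refl[OF X x] unit_le[OF yoneda_PP_car[OF X x] x] by (simp add: yoneda_eq[OF X x])
  then have "?v \<le> qmult (rdiv ?v (ext X x)) (snd ?gfy x ())" by (rule DQ_le_mult_rdiv[OF v])
  also have "\<dots> \<le> qmult (rdiv (pre (PP X) ?gfy (g b)) (fst ?gfy)) (snd ?gfy x ())"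
    using vle gf(2) by (simp add: qmult_mono_left rdiv_mono)
  also have "\<dots> \<le> ?u" by (rule PP_pre_le[OF gf(1) gb(1) x])
  finally show "?v \<le> ?u" .
qed

lemma g_eq_pol_down: "g = pol_down X Y \<phi>"
proof
  fix b show "g b = pol_down X Y \<phi> b"
  proof (cases "b \<in> PD_car Y")
    case True
    then show ?thesis
      using g_PP_car fst_g pol_down_PP_car[OF X Y \<phi>_distributor] g_eq
      by (intro PP_eqI) simp_all
  next
    case False
    then show ?thesis using g_undefined by (simp add: pol_down_def)
  qed
qed

lemma g_coyoneda: "y \<in> car Y \<Longrightarrow> x \<in> car X \<Longrightarrow> snd (g (coyoneda Y y)) x () = \<phi> x y"
  using pol_down_coyoneda[OF X Y \<phi>_distributor] by (simp add: g_eq_pol_down)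

lemma f_eq:
  assumes a: "a \<in> PP_car X" and y: "y \<in> car Y"
  shows "snd (f a) () y = snd (pol_up X Y \<phi> a) () y"
proof (rule antisym)
  let ?v = "snd (f a) () y" and ?cy = "coyoneda Y y"
  have fa: "f a \<in> PD_car Y" "fst (f a) = fst a" using f_PD_car[OF a] fst_f[OF a] .
  have cy: "?cy \<in> PD_car Y" by (rule coyoneda_PD_car[OF Y y])
  have gcy: "g ?cy \<in> PP_car X" "fst (g ?cy) = ext Y y"
    using g_PP_car[OF cy] fst_g[OF cy] by (simp_all add: coyoneda_eq[OF Y y])
  show "?v \<le> snd (pol_up X Y \<phi> a) () y"
  proof (rule pol_up_greatest[OF a y])
    show "?v \<in> DQ (fst a) (ext Y y)" using PD_car_DQ[OF fa(1) y] fa(2) by simp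
  next
    fix x assume x: "x \<in> car X"
    have v_le: "?v \<le> pre (PP X) (g (f a)) (g ?cy)"
      using le_pre_coyoneda[OF Y fa(1) y] g_pre_le[OF fa(1) cy] by (rule order_trans)
    have "qmult (rdiv ?v (fst a)) (snd a x ())
        \<le> qmult (rdiv (pre (PP X) (g (f a)) (g ?cy)) (fst (g (f a)))) (snd (g (f a)) x ())"
      using qmult_mono[OF rdiv_mono[OF v_le] unit_le[OF a x]] fst_g[OF fa(1)] fa(2) by simp
    also have "\<dots> \<le> snd (g ?cy) x ()" by (rule PP_pre_le[OF g_PP_car[OF fa(1)] gcy(1) x])
    finally show "qmult (rdiv ?v (fst a)) (snd a x ()) \<le> \<phi> x y" using g_coyoneda[OF y x] by simp
  qed
  let ?w = "snd (pol_up X Y \<phi> a) () y" and ?fgcy = "f (g ?cy)"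
  have w: "?w \<in> DQ (fst a) (ext Y y)" by (rule pol_up_DQ[OF a y])
  have "?w \<le> pre (PP X) a (g ?cy)"
    using w gcy pol_up_le[OF a _ y] g_coyoneda[OF y]
    by (intro PP_pre_greatest[OF a gcy(1)]) simp_all
  also have "\<dots> \<le> pre (PD Y) (f a) ?fgcy" by (rule f_pre_le[OF a gcy(1)])
  finally have wle: "?w \<le> pre (PD Y) (f a) ?fgcy" .
  have fg: "?fgcy \<in> PD_car Y" "fst ?fgcy = ext Y y"
    using f_PD_car[OF gcy(1)] fst_f[OF gcy(1)] gcy(2) by simp_all
  have "ext Y y \<le> snd ?fgcy () y"
    using pre_refl[OF Y y] counit_le[OF cy y] by (simp add: coyoneda_eq[OF Y y])
  then have "?w \<le> qmult (rdiv (snd ?fgcy () y) (ext Y y)) ?w" by (rule le_mult_rdiv)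
  also have "\<dots> \<le> qmult (rdiv (snd ?fgcy () y) (fst ?fgcy)) (pre (PD Y) (f a) ?fgcy)"
    using wle fg(2) by (simp add: qmult_mono_right)
  also have "\<dots> \<le> ?v" by (rule PD_pre_le[OF fa(1) fg(1) y])
  finally show "?w \<le> ?v" .
qed

lemma f_eq_pol_up: "f = pol_up X Y \<phi>"
proof
  fix a show "f a = pol_up X Y \<phi> a"
  proof (cases "a \<in> PP_car X")
    case True
    then show ?thesis
      using f_PD_car fst_f pol_up_PD_car[OF X Y \<phi>_distributor] f_eq
      by (intro PD_eqI) simp_all
  next
    case False
    then show ?thesis using f_undefined by (simp add: pol_up_def)
  qed
qed

end

lemma bij_betw_distributors_polarities:
  assumes X: "qpreordered X" and Y: "qpreordered Y"
  shows "bij_betw (\<lambda>\<phi>. (pol_up X Y \<phi>, pol_down X Y \<phi>)) (distributors X Y) (polarities X Y)"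
proof (rule bij_betw_byWitness[where f' = "\<lambda>p. PD_to_dist X Y (compose (car X) (fst p) (yoneda X))"])
  have polarity: "polarity X Y f g" if "(f, g) \<in> polarities X Y" for f g
    using that X Y by (simp add: polarity_def polarity_axioms_def qgalois_pair_def polarities_def qgalois_set_def)
  show "\<forall>\<phi>\<in>distributors X Y. PD_to_dist X Y (compose (car X) (fst (pol_up X Y \<phi>, pol_down X Y \<phi>)) (yoneda X)) = \<phi>"
    using PD_to_dist_pol_up_yoneda[OF X Y] by simp
  show "\<forall>p\<in>polarities X Y. (pol_up X Y (PD_to_dist X Y (compose (car X) (fst p) (yoneda X))),
      pol_down X Y (PD_to_dist X Y (compose (car X) (fst p) (yoneda X)))) = p"
  proof
    fix p assume p: "p \<in> polarities X Y"
    obtain f g where fg: "p = (f, g)" by fastforce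
    interpret polarity X Y f g using p fg by (simp add: polarity)
    show "(pol_up X Y (PD_to_dist X Y (compose (car X) (fst p) (yoneda X))),
        pol_down X Y (PD_to_dist X Y (compose (car X) (fst p) (yoneda X)))) = p"
      using f_eq_pol_up g_eq_pol_down by (simp add: fg \<phi>_def)
  qed
  show "(\<lambda>\<phi>. (pol_up X Y \<phi>, pol_down X Y \<phi>)) ` distributors X Y \<subseteq> polarities X Y"
    using qgalois_pol[OF X Y] by (auto simp: polarities_def qgalois_set_def)
  show "(\<lambda>p. PD_to_dist X Y (compose (car X) (fst p) (yoneda X))) ` polarities X Y \<subseteq> distributors X Y"
  proof (rule image_subsetI)
    fix p assume p: "p \<in> polarities X Y"
    obtain f g where fg: "p = (f, g)" by fastforce
    interpret polarity X Y f g using p fg by (simp add: polarity)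
    show "PD_to_dist X Y (compose (car X) (fst p) (yoneda X)) \<in> distributors X Y"
      using \<phi>_distributor by (simp add: fg \<phi>_def)
  qed
qed

section \<open>Axialities\<close>

text \<open>\<open>ax_left X Y \<phi> \<mu> = \<mu> \<circ> \<phi>\<close> and \<open>ax_right X Y \<phi> \<mu> = \<mu> \<swarrow> \<phi>\<close>.\<close>
definition ax_left :: "('a, 'q::quantale) qpos \<Rightarrow> ('b, 'q) qpos \<Rightarrow> ('a \<Rightarrow> 'b \<Rightarrow> 'q) \<Rightarrow>
    'q \<times> ('b \<Rightarrow> unit \<Rightarrow> 'q) \<Rightarrow> 'q \<times> ('a \<Rightarrow> unit \<Rightarrow> 'q)" where
  "ax_left X Y \<phi> = (\<lambda>a\<in>PP_car Y. (fst a, qcomp (qs Y) (snd a) \<phi>))"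

definition ax_right :: "('a, 'q::quantale) qpos \<Rightarrow> ('b, 'q) qpos \<Rightarrow> ('a \<Rightarrow> 'b \<Rightarrow> 'q) \<Rightarrow>
    'q \<times> ('a \<Rightarrow> unit \<Rightarrow> 'q) \<Rightarrow> 'q \<times> ('b \<Rightarrow> unit \<Rightarrow> 'q)" where
  "ax_right X Y \<phi> = (\<lambda>b\<in>PP_car X. (fst b, \<lambda>y _. if y \<in> car Y
     then dq_rimp (ext Y y) (fst b) (car X) (\<lambda>x. \<phi> x y) (\<lambda>x. snd b x ()) else bot))"

lemma fst_ax_left [simp]: "a \<in> PP_car Y \<Longrightarrow> fst (ax_left X Y \<phi> a) = fst a"
  by (simp add: ax_left_def)

lemma fst_ax_right [simp]: "b \<in> PP_car X \<Longrightarrow> fst (ax_right X Y \<phi> b) = fst b"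
  by (simp add: ax_right_def)

lemma snd_ax_left:
  "a \<in> PP_car Y \<Longrightarrow>
   snd (ax_left X Y \<phi> a) x u = Sup ((\<lambda>y. qmult (rdiv (snd a y ()) (ext Y y)) (\<phi> x y)) ` car Y)"
  by (simp add: ax_left_def qcomp_def qs_def)

lemma ax_left_upper:
  "a \<in> PP_car Y \<Longrightarrow> y \<in> car Y \<Longrightarrow> qmult (rdiv (snd a y ()) (ext Y y)) (\<phi> x y) \<le> snd (ax_left X Y \<phi> a) x ()"
  by (simp add: snd_ax_left Sup_upper)

lemma ax_left_least:
  "a \<in> PP_car Y \<Longrightarrow> (\<And>y. y \<in> car Y \<Longrightarrow> qmult (rdiv (snd a y ()) (ext Y y)) (\<phi> x y) \<le> c) \<Longrightarrow>
   snd (ax_left X Y \<phi> a) x () \<le> c"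
  by (auto simp: snd_ax_left intro!: Sup_least)

lemma ax_right_DQ:
  "b \<in> PP_car X \<Longrightarrow> y \<in> car Y \<Longrightarrow> snd (ax_right X Y \<phi> b) y () \<in> DQ (ext Y y) (fst b)"
  by (simp add: ax_right_def dq_rimp_DQ)

lemma ax_right_greatest:
  "b \<in> PP_car X \<Longrightarrow> y \<in> car Y \<Longrightarrow> u \<in> DQ (ext Y y) (fst b) \<Longrightarrow>
   (\<And>x. x \<in> car X \<Longrightarrow> qmult (rdiv u (ext Y y)) (\<phi> x y) \<le> snd b x ()) \<Longrightarrow>
   u \<le> snd (ax_right X Y \<phi> b) y ()"
  by (simp add: ax_right_def dq_rimp_greatest)

context
  fixes X :: "('a, 'q::quantale) qpos" and Y :: "('b, 'q) qpos" and \<phi>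
  assumes X: "qpreordered X" and Y: "qpreordered Y" and \<phi>: "\<phi> \<in> distributors X Y"
begin

lemma ax_right_le:
  "b \<in> PP_car X \<Longrightarrow> x \<in> car X \<Longrightarrow> y \<in> car Y \<Longrightarrow>
   qmult (rdiv (snd (ax_right X Y \<phi> b) y ()) (ext Y y)) (\<phi> x y) \<le> snd b x ()"
  unfolding ax_right_def
  by (simp, rule dq_rimp_le) (auto intro: DQ_ldiv_cancel distributor_DQ[OF X Y \<phi>])

lemma ax_left_DQ:
  assumes a: "a \<in> PP_car Y" and x: "x \<in> car X"
  shows "snd (ax_left X Y \<phi> a) x () \<in> DQ (ext X x) (fst a)"
  unfolding snd_ax_left[OF a]
  using DQ_comp[OF PP_car_DQ[OF a] distributor_DQ[OF X Y \<phi> x]] by (intro DQ_Sup) auto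

lemma ax_left_PP_car:
  assumes a: "a \<in> PP_car Y"
  shows "ax_left X Y \<phi> a \<in> PP_car X"
proof -
  have "(fst a, snd (ax_left X Y \<phi> a)) \<in> PP_car X"
  proof (rule PP_carI)
    fix x x' assume x: "x \<in> car X" "x' \<in> car X"
    have "qmult (rdiv (snd (ax_left X Y \<phi> a) x' ()) (ext X x')) (pre X x x')
        = qmult (snd (ax_left X Y \<phi> a) x' ()) (ldiv (ext X x') (pre X x x'))"
      by (rule rdiv_mult_eq_mult_ldiv[OF DQ_rdiv_cancel[OF ax_left_DQ[OF a x(2)]]
            DQ_ldiv_cancel[OF pre_DQ[OF X x]]])
    also have "\<dots> = Sup ((\<lambda>y. qmult (qmult (rdiv (snd a y ()) (ext Y y)) (\<phi> x' y))
                               (ldiv (ext X x') (pre X x x'))) ` car Y)"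
      unfolding snd_ax_left[OF a] qmult_Sup_left image_image ..
    also have "\<dots> \<le> snd (ax_left X Y \<phi> a) x ()"
    proof (rule Sup_least, clarify)
      fix y assume y: "y \<in> car Y"
      have "qmult (qmult (rdiv (snd a y ()) (ext Y y)) (\<phi> x' y)) (ldiv (ext X x') (pre X x x'))
          = qmult (rdiv (snd a y ()) (ext Y y)) (qmult (rdiv (\<phi> x' y) (ext X x')) (pre X x x'))"
        unfolding qmult_assoc
        using rdiv_mult_eq_mult_ldiv[OF DQ_rdiv_cancel[OF distributor_DQ[OF X Y \<phi> x(2) y]]
            DQ_ldiv_cancel[OF pre_DQ[OF X x]]] by simp
      also have "\<dots> \<le> qmult (rdiv (snd a y ()) (ext Y y)) (\<phi> x y)"
        by (rule qmult_mono_right[OF distributor_pre_left[OF X Y \<phi> x y]])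
      also have "\<dots> \<le> snd (ax_left X Y \<phi> a) x ()" by (rule ax_left_upper[OF a y])
      finally show "qmult (qmult (rdiv (snd a y ()) (ext Y y)) (\<phi> x' y)) (ldiv (ext X x') (pre X x x'))
          \<le> snd (ax_left X Y \<phi> a) x ()" .
    qed
    finally show "qmult (rdiv (snd (ax_left X Y \<phi> a) x' ()) (ext X x')) (pre X x x')
        \<le> snd (ax_left X Y \<phi> a) x ()" .
  next
    fix x assume "x \<notin> car X"
    then show "snd (ax_left X Y \<phi> a) x () = bot"
      using distributor_bot[OF X Y \<phi>] by (simp add: snd_ax_left[OF a])
  qed (rule ax_left_DQ[OF a])
  then show ?thesis using a by (simp add: ax_left_def)
qed

lemma ax_right_PP_car:
  assumes b: "b \<in> PP_car X"
  shows "ax_right X Y \<phi> b \<in> PP_car Y"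
proof -
  have "(fst b, snd (ax_right X Y \<phi> b)) \<in> PP_car Y"
  proof (rule PP_carI)
    fix y y' assume y: "y \<in> car Y" "y' \<in> car Y"
    let ?P = "rdiv (snd (ax_right X Y \<phi> b) y' ()) (ext Y y')"
    show "qmult ?P (pre Y y y') \<le> snd (ax_right X Y \<phi> b) y ()"
    proof (rule ax_right_greatest[OF b y(1) DQ_comp[OF ax_right_DQ[OF b y(2)] pre_DQ[OF Y y]]])
      fix x assume x: "x \<in> car X"
      have "qmult (rdiv (qmult ?P (pre Y y y')) (ext Y y)) (\<phi> x y)
          = qmult ?P (qmult (rdiv (pre Y y y') (ext Y y)) (\<phi> x y))"
        by (rule rdiv_mult_assoc[OF DQ_rdiv_cancel[OF pre_DQ[OF Y y]]
              DQ_ldiv_cancel[OF distributor_DQ[OF X Y \<phi> x y(1)]]])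
      also have "\<dots> \<le> qmult ?P (\<phi> x y')"
        by (rule qmult_mono_right[OF distributor_pre_right[OF X Y \<phi> x y(2,1)]])
      also have "\<dots> \<le> snd b x ()" by (rule ax_right_le[OF b x y(2)])
      finally show "qmult (rdiv (qmult ?P (pre Y y y')) (ext Y y)) (\<phi> x y) \<le> snd b x ()" .
    qed
  qed (use b in \<open>simp_all add: ax_right_def dq_rimp_DQ\<close>)
  then show ?thesis using b by (simp add: ax_right_def)
qed


lemma pre_le_pre_ax_left:
  assumes a: "a \<in> PP_car Y" and a': "a' \<in> PP_car Y"
  shows "pre (PP Y) a a' \<le> pre (PP X) (ax_left X Y \<phi> a) (ax_left X Y \<phi> a')"
proof (rule PP_pre_greatest[OF ax_left_PP_car[OF a] ax_left_PP_car[OF a']])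
  show "pre (PP Y) a a' \<in> DQ (fst (ax_left X Y \<phi> a)) (fst (ax_left X Y \<phi> a'))"
    using PP_pre_DQ[OF a a'] a a' by simp
next
  fix x assume x: "x \<in> car X"
  let ?U = "rdiv (pre (PP Y) a a') (fst a)"
  have "qmult ?U (snd (ax_left X Y \<phi> a) x ()) \<le> snd (ax_left X Y \<phi> a') x ()"
    unfolding snd_ax_left[OF a] qmult_Sup_right image_image
  proof (rule Sup_least, clarify)
    fix y assume y: "y \<in> car Y"
    have "qmult ?U (qmult (rdiv (snd a y ()) (ext Y y)) (\<phi> x y))
        \<le> qmult (rdiv (qmult ?U (snd a y ())) (ext Y y)) (\<phi> x y)"
      unfolding qmult_assoc[symmetric] by (intro qmult_mono_left mult_rdiv_le_rdiv_mult)
    also have "\<dots> \<le> qmult (rdiv (snd a' y ()) (ext Y y)) (\<phi> x y)"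
      by (intro qmult_mono_left rdiv_mono PP_pre_le[OF a a' y])
    also have "\<dots> \<le> snd (ax_left X Y \<phi> a') x ()" by (rule ax_left_upper[OF a' y])
    finally show "qmult ?U (qmult (rdiv (snd a y ()) (ext Y y)) (\<phi> x y)) \<le> snd (ax_left X Y \<phi> a') x ()" .
  qed
  then show "qmult (rdiv (pre (PP Y) a a') (fst (ax_left X Y \<phi> a))) (snd (ax_left X Y \<phi> a) x ())
      \<le> snd (ax_left X Y \<phi> a') x ()"
    using a by simp
qed

lemma pre_le_pre_ax_right:
  assumes b: "b \<in> PP_car X" and b': "b' \<in> PP_car X"
  shows "pre (PP X) b b' \<le> pre (PP Y) (ax_right X Y \<phi> b) (ax_right X Y \<phi> b')"
proof (rule PP_pre_greatest[OF ax_right_PP_car[OF b] ax_right_PP_car[OF b']])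
  show "pre (PP X) b b' \<in> DQ (fst (ax_right X Y \<phi> b)) (fst (ax_right X Y \<phi> b'))"
    using PP_pre_DQ[OF b b'] b b' by simp
next
  fix y assume y: "y \<in> car Y"
  let ?w = "pre (PP X) b b'"
  let ?c = "qmult (rdiv ?w (fst b)) (snd (ax_right X Y \<phi> b) y ())"
  have w: "?w \<in> DQ (fst b) (fst b')" by (rule PP_pre_DQ[OF b b'])
  have "?c \<le> snd (ax_right X Y \<phi> b') y ()"
  proof (rule ax_right_greatest[OF b' y DQ_comp[OF w ax_right_DQ[OF b y]]])
    fix x assume x: "x \<in> car X"
    have "qmult (rdiv ?c (ext Y y)) (\<phi> x y)
        = qmult (rdiv ?w (fst b)) (qmult (rdiv (snd (ax_right X Y \<phi> b) y ()) (ext Y y)) (\<phi> x y))"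
      by (rule rdiv_mult_assoc[OF DQ_rdiv_cancel[OF ax_right_DQ[OF b y]]
            DQ_ldiv_cancel[OF distributor_DQ[OF X Y \<phi> x y]]])
    also have "\<dots> \<le> qmult (rdiv ?w (fst b)) (snd b x ())" by (rule qmult_mono_right[OF ax_right_le[OF b x y]])
    also have "\<dots> \<le> snd b' x ()" by (rule PP_pre_le[OF b b' x])
    finally show "qmult (rdiv ?c (ext Y y)) (\<phi> x y) \<le> snd b' x ()" .
  qed
  then show "qmult (rdiv ?w (fst (ax_right X Y \<phi> b))) (snd (ax_right X Y \<phi> b) y ())
      \<le> snd (ax_right X Y \<phi> b') y ()"
    using b by simp
qed

lemma qgalois_ax: "qgalois (PP Y) (PP X) (ax_left X Y \<phi>) (ax_right X Y \<phi>)"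
  unfolding qgalois_def
proof (intro conjI ballI)
  show "qmono (PP Y) (PP X) (ax_left X Y \<phi>)"
    by (simp add: qmono_def ax_left_PP_car pre_le_pre_ax_left) (simp add: ax_left_def)
  show "qmono (PP X) (PP Y) (ax_right X Y \<phi>)"
    by (simp add: qmono_def ax_right_PP_car pre_le_pre_ax_right) (simp add: ax_right_def)
next
  fix a assume "a \<in> car (PP Y)"
  then have a: "a \<in> PP_car Y" by simp
  have b: "ax_left X Y \<phi> a \<in> PP_car X" by (rule ax_left_PP_car[OF a])
  have "snd a y () \<le> snd (ax_right X Y \<phi> (ax_left X Y \<phi> a)) y ()" if y: "y \<in> car Y" for y
    using PP_car_DQ[OF a y] ax_left_upper[OF a y] a
    by (intro ax_right_greatest[OF b y]) simp_all
  then show "ext (PP Y) a \<le> pre (PP Y) a (ax_right X Y \<phi> (ax_left X Y \<phi> a))"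
    using PP_extent_le_pre_iff[OF a ax_right_PP_car[OF b] refl] a b by simp
next
  fix b assume "b \<in> car (PP X)"
  then have b: "b \<in> PP_car X" by simp
  have a: "ax_right X Y \<phi> b \<in> PP_car Y" by (rule ax_right_PP_car[OF b])
  have "snd (ax_left X Y \<phi> (ax_right X Y \<phi> b)) x () \<le> snd b x ()" if x: "x \<in> car X" for x
    using ax_right_le[OF b x] by (intro ax_left_least[OF a])
  then show "ext (PP X) b \<le> pre (PP X) (ax_left X Y \<phi> (ax_right X Y \<phi> b)) b"
    using PP_extent_le_pre_iff[OF ax_left_PP_car[OF a] b _ refl] a b by simp
qed

lemma ax_left_yoneda:
  assumes y: "y \<in> car Y"
  shows "ax_left X Y \<phi> (yoneda Y y) = dist_to_PP X Y \<phi> y"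
proof (rule PP_eqI)
  have yy: "yoneda Y y \<in> PP_car Y" by (rule yoneda_PP_car[OF Y y])
  show "ax_left X Y \<phi> (yoneda Y y) \<in> PP_car X" by (rule ax_left_PP_car[OF yy])
  show "dist_to_PP X Y \<phi> y \<in> PP_car X"
    using dist_to_PP_qmaps[OF X Y \<phi>] y by (simp add: qmaps_def qmono_def)
  show "fst (ax_left X Y \<phi> (yoneda Y y)) = fst (dist_to_PP X Y \<phi> y)"
    using yy y by (simp add: yoneda_eq[OF Y y] dist_to_PP_def)
  fix x assume x: "x \<in> car X"
  have le: "snd (ax_left X Y \<phi> (yoneda Y y)) x () \<le> \<phi> x y"
    using distributor_pre_right[OF X Y \<phi> x y]
    by (intro ax_left_least[OF yy]) (simp add: yoneda_eq[OF Y y])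
  have "\<phi> x y \<le> qmult (rdiv (pre Y y y) (ext Y y)) (\<phi> x y)"
    by (rule le_mult_rdiv[OF pre_refl[OF Y y]])
  also have "\<dots> \<le> snd (ax_left X Y \<phi> (yoneda Y y)) x ()"
    using ax_left_upper[where X = X and \<phi> = \<phi> and x = x, OF yy y] by (simp add: yoneda_eq[OF Y y])
  finally show "snd (ax_left X Y \<phi> (yoneda Y y)) x () = snd (dist_to_PP X Y \<phi> y) x ()"
    using le y by (simp add: dist_to_PP_def)
qed

lemma PP_to_dist_ax_left_yoneda: "PP_to_dist X Y (compose (car Y) (ax_left X Y \<phi>) (yoneda Y)) = \<phi>"
proof -
  have "compose (car Y) (ax_left X Y \<phi>) (yoneda Y) = dist_to_PP X Y \<phi>"
    by (rule ext) (simp add: compose_def ax_left_yoneda dist_to_PP_def)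
  then show ?thesis using PP_to_dist_dist_to_PP[OF X Y \<phi>] by simp
qed
end

locale axiality = qgalois_pair "PP Y" "PP X" f g
  for X :: "('a, 'q::quantale) qpos" and Y :: "('b, 'q) qpos" and f g +
  assumes X: "qpreordered X" and Y: "qpreordered Y"
begin

lemma f_PP_car: "a \<in> PP_car Y \<Longrightarrow> f a \<in> PP_car X" and fst_f: "a \<in> PP_car Y \<Longrightarrow> fst (f a) = fst a"
  and g_PP_car: "b \<in> PP_car X \<Longrightarrow> g b \<in> PP_car Y" and fst_g: "b \<in> PP_car X \<Longrightarrow> fst (g b) = fst b"
  using f_car ext_f g_car ext_g by simp_all

lemma f_pre_le: "a \<in> PP_car Y \<Longrightarrow> a' \<in> PP_car Y \<Longrightarrow> pre (PP Y) a a' \<le> pre (PP X) (f a) (f a')"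
  and g_pre_le: "b \<in> PP_car X \<Longrightarrow> b' \<in> PP_car X \<Longrightarrow> pre (PP X) b b' \<le> pre (PP Y) (g b) (g b')"
  using f_pre g_pre by simp_all

lemma unit_le: "a \<in> PP_car Y \<Longrightarrow> y \<in> car Y \<Longrightarrow> snd a y () \<le> snd (g (f a)) y ()"
  using unit_pre PP_extent_le_pre_iff[OF _ g_PP_car[OF f_PP_car] refl] by (simp add: fst_f fst_g f_PP_car)

lemma counit_le: "b \<in> PP_car X \<Longrightarrow> x \<in> car X \<Longrightarrow> snd (f (g b)) x () \<le> snd b x ()"
  using counit_pre PP_extent_le_pre_iff[OF f_PP_car[OF g_PP_car] _ _ refl] by (simp add: fst_f fst_g g_PP_car)

definition \<phi> :: "'a \<Rightarrow> 'b \<Rightarrow> 'q" where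
  "\<phi> = PP_to_dist X Y (compose (car Y) f (yoneda Y))"

lemma \<phi>_distributor: "\<phi> \<in> distributors X Y"
  unfolding \<phi>_def
  by (rule PP_to_dist_distributors[OF X Y]) (simp add: qmaps_def qmono_compose[OF qmono_yoneda[OF Y] f_qmono])

lemma \<phi>_eq: "y \<in> car Y \<Longrightarrow> \<phi> x y = snd (f (yoneda Y y)) x ()"
  by (simp add: \<phi>_def PP_to_dist_def compose_def)

lemma f_yoneda: "y \<in> car Y \<Longrightarrow> f (yoneda Y y) \<in> PP_car X"
  and fst_f_yoneda: "y \<in> car Y \<Longrightarrow> fst (f (yoneda Y y)) = ext Y y"
  using f_PP_car fst_f yoneda_PP_car[OF Y] by (simp_all add: yoneda_eq[OF Y])

lemma g_eq:
  assumes b: "b \<in> PP_car X" and y: "y \<in> car Y"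
  shows "snd (g b) y () = snd (ax_right X Y \<phi> b) y ()"
proof (rule antisym)
  let ?u = "snd (g b) y ()" and ?fy = "f (yoneda Y y)"
  have gb: "g b \<in> PP_car Y" "fst (g b) = fst b" using g_PP_car[OF b] fst_g[OF b] .
  show "?u \<le> snd (ax_right X Y \<phi> b) y ()"
  proof (rule ax_right_greatest[OF b y])
    show "?u \<in> DQ (ext Y y) (fst b)" using PP_car_DQ[OF gb(1) y] gb(2) by simp
  next
    fix x assume x: "x \<in> car X"
    have "?u \<le> pre (PP X) ?fy (f (g b))"
      using le_pre_yoneda[OF Y gb(1) y] f_pre_le[OF yoneda_PP_car[OF Y y] gb(1)] by (rule order_trans)
    then have "qmult (rdiv ?u (ext Y y)) (\<phi> x y)
        \<le> qmult (rdiv (pre (PP X) ?fy (f (g b))) (fst ?fy)) (snd ?fy x ())"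
      using fst_f_yoneda[OF y] \<phi>_eq[OF y] by (simp add: qmult_mono_left rdiv_mono)
    also have "\<dots> \<le> snd (f (g b)) x ()" by (rule PP_pre_le[OF f_yoneda[OF y] f_PP_car[OF gb(1)] x])
    also have "\<dots> \<le> snd b x ()" by (rule counit_le[OF b x])
    finally show "qmult (rdiv ?u (ext Y y)) (\<phi> x y) \<le> snd b x ()" .
  qed
  let ?v = "snd (ax_right X Y \<phi> b) y ()" and ?gfy = "g (f (yoneda Y y))"
  have v: "?v \<in> DQ (ext Y y) (fst b)" by (rule ax_right_DQ[OF b y])
  have "?v \<le> pre (PP X) ?fy b"
    using v fst_f_yoneda[OF y] ax_right_le[OF X Y \<phi>_distributor b _ y] \<phi>_eq[OF y]
    by (intro PP_pre_greatest[OF f_yoneda[OF y] b]) simp_all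
  also have "\<dots> \<le> pre (PP Y) ?gfy (g b)" by (rule g_pre_le[OF f_yoneda[OF y] b])
  finally have vle: "?v \<le> pre (PP Y) ?gfy (g b)" .
  have gf: "?gfy \<in> PP_car Y" "fst ?gfy = ext Y y"
    using g_PP_car[OF f_yoneda[OF y]] fst_g[OF f_yoneda[OF y]] fst_f_yoneda[OF y] by simp_all
  have "ext Y y \<le> snd ?gfy y ()"
    using pre_refl[OF Y y] unit_le[OF yoneda_PP_car[OF Y y] y] by (simp add: yoneda_eq[OF Y y])
  then have "?v \<le> qmult (rdiv ?v (ext Y y)) (snd ?gfy y ())" by (rule DQ_le_mult_rdiv[OF v])
  also have "\<dots> \<le> qmult (rdiv (pre (PP Y) ?gfy (g b)) (fst ?gfy)) (snd ?gfy y ())"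
    using vle gf(2) by (simp add: qmult_mono_left rdiv_mono)
  also have "\<dots> \<le> ?u" by (rule PP_pre_le[OF gf(1) gb(1) y])
  finally show "?v \<le> ?u" .
qed

lemma g_eq_ax_right: "g = ax_right X Y \<phi>"
proof
  fix b show "g b = ax_right X Y \<phi> b"
  proof (cases "b \<in> PP_car X")
    case True
    then show ?thesis
      using g_PP_car fst_g ax_right_PP_car[OF X Y \<phi>_distributor] g_eq
      by (intro PP_eqI) simp_all
  next
    case False
    then show ?thesis using g_undefined by (simp add: ax_right_def)
  qed
qed

lemma f_eq:
  assumes a: "a \<in> PP_car Y" and x: "x \<in> car X"
  shows "snd (f a) x () = snd (ax_left X Y \<phi> a) x ()"
proof (rule antisym[rotated])
  show "snd (ax_left X Y \<phi> a) x () \<le> snd (f a) x ()"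
  proof (rule ax_left_least[OF a])
    fix y assume y: "y \<in> car Y"
    have "snd a y () \<le> pre (PP X) (f (yoneda Y y)) (f a)"
      using le_pre_yoneda[OF Y a y] f_pre_le[OF yoneda_PP_car[OF Y y] a] by (rule order_trans)
    then have "qmult (rdiv (snd a y ()) (ext Y y)) (\<phi> x y)
        \<le> qmult (rdiv (pre (PP X) (f (yoneda Y y)) (f a)) (fst (f (yoneda Y y)))) (snd (f (yoneda Y y)) x ())"
      using fst_f_yoneda[OF y] \<phi>_eq[OF y] by (simp add: qmult_mono_left rdiv_mono)
    also have "\<dots> \<le> snd (f a) x ()" by (rule PP_pre_le[OF f_yoneda[OF y] f_PP_car[OF a] x])
    finally show "qmult (rdiv (snd a y ()) (ext Y y)) (\<phi> x y) \<le> snd (f a) x ()" .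
  qed
  let ?c = "ax_left X Y \<phi> a"
  have c: "?c \<in> PP_car X" "fst ?c = fst a"
    using ax_left_PP_car[OF X Y \<phi>_distributor a] a by simp_all
  have gc: "g ?c \<in> PP_car Y" "fst (g ?c) = fst a" using g_PP_car[OF c(1)] fst_g[OF c(1)] c(2) by simp_all
  have "snd a y () \<le> snd (g ?c) y ()" if y: "y \<in> car Y" for y
  proof -
    have "snd a y () \<le> snd (ax_right X Y \<phi> ?c) y ()"
      using PP_car_DQ[OF a y] c(2) ax_left_upper[OF a y]
      by (intro ax_right_greatest[OF c(1) y]) simp_all
    then show ?thesis using g_eq[OF c(1) y] by simp
  qed
  then have "fst a \<le> pre (PP Y) a (g ?c)"
    using PP_extent_le_pre_iff[OF a gc(1) refl gc(2)] by simp
  also have "\<dots> \<le> pre (PP X) (f a) (f (g ?c))" by (rule f_pre_le[OF a gc(1)])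
  finally have "snd (f a) x () \<le> snd (f (g ?c)) x ()"
    using PP_extent_le_pre_iff[OF f_PP_car[OF a] f_PP_car[OF gc(1)] fst_f[OF a]] fst_f[OF gc(1)] gc(2) x
    by simp
  also have "\<dots> \<le> snd ?c x ()" by (rule counit_le[OF c(1) x])
  finally show "snd (f a) x () \<le> snd ?c x ()" .
qed

lemma f_eq_ax_left: "f = ax_left X Y \<phi>"
proof
  fix a show "f a = ax_left X Y \<phi> a"
  proof (cases "a \<in> PP_car Y")
    case True
    then show ?thesis
      using f_PP_car fst_f ax_left_PP_car[OF X Y \<phi>_distributor] f_eq
      by (intro PP_eqI) simp_all
  next
    case False
    then show ?thesis using f_undefined by (simp add: ax_left_def)
  qed
qed

end

lemma bij_betw_distributors_axialities:
  assumes X: "qpreordered X" and Y: "qpreordered Y"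
  shows "bij_betw (\<lambda>\<phi>. (ax_left X Y \<phi>, ax_right X Y \<phi>)) (distributors X Y) (axialities Y X)"
proof (rule bij_betw_byWitness[where f' = "\<lambda>p. PP_to_dist X Y (compose (car Y) (fst p) (yoneda Y))"])
  have axiality: "axiality X Y f g" if "(f, g) \<in> axialities Y X" for f g
    using that X Y by (simp add: axiality_def axiality_axioms_def qgalois_pair_def axialities_def qgalois_set_def)
  show "\<forall>\<phi>\<in>distributors X Y. PP_to_dist X Y (compose (car Y) (fst (ax_left X Y \<phi>, ax_right X Y \<phi>)) (yoneda Y)) = \<phi>"
    using PP_to_dist_ax_left_yoneda[OF X Y] by simp
  show "\<forall>p\<in>axialities Y X. (ax_left X Y (PP_to_dist X Y (compose (car Y) (fst p) (yoneda Y))),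
      ax_right X Y (PP_to_dist X Y (compose (car Y) (fst p) (yoneda Y)))) = p"
  proof
    fix p assume p: "p \<in> axialities Y X"
    obtain f g where fg: "p = (f, g)" by fastforce
    interpret axiality X Y f g using p fg by (simp add: axiality)
    show "(ax_left X Y (PP_to_dist X Y (compose (car Y) (fst p) (yoneda Y))),
        ax_right X Y (PP_to_dist X Y (compose (car Y) (fst p) (yoneda Y)))) = p"
      using f_eq_ax_left g_eq_ax_right by (simp add: fg \<phi>_def)
  qed
  show "(\<lambda>\<phi>. (ax_left X Y \<phi>, ax_right X Y \<phi>)) ` distributors X Y \<subseteq> axialities Y X"
    using qgalois_ax[OF X Y] by (auto simp: axialities_def qgalois_set_def)
  show "(\<lambda>p. PP_to_dist X Y (compose (car Y) (fst p) (yoneda Y))) ` axialities Y X \<subseteq> distributors X Y"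
  proof (rule image_subsetI)
    fix p assume p: "p \<in> axialities Y X"
    obtain f g where fg: "p = (f, g)" by fastforce
    interpret axiality X Y f g using p fg by (simp add: axiality)
    show "PP_to_dist X Y (compose (car Y) (fst p) (yoneda Y)) \<in> distributors X Y"
      using \<phi>_distributor by (simp add: fg \<phi>_def)
  qed
qed

section \<open>Dual axialities\<close>

text \<open>\<open>dax_left X Y \<phi> \<lambda> = \<phi> \<searrow> \<lambda>\<close> and \<open>dax_right X Y \<phi> \<lambda> = \<phi> \<circ> \<lambda>\<close>.\<close>
definition dax_left :: "('a, 'q::quantale) qpos \<Rightarrow> ('b, 'q) qpos \<Rightarrow> ('a \<Rightarrow> 'b \<Rightarrow> 'q) \<Rightarrow>
    'q \<times> (unit \<Rightarrow> 'b \<Rightarrow> 'q) \<Rightarrow> 'q \<times> (unit \<Rightarrow> 'a \<Rightarrow> 'q)" where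
  "dax_left X Y \<phi> = (\<lambda>l\<in>PD_car Y. (fst l, \<lambda>_ x. if x \<in> car X
     then dq_limp (fst l) (ext X x) (car Y) (\<lambda>y. rdiv (\<phi> x y) (ext X x)) (\<lambda>y. snd l () y) else bot))"

definition dax_right :: "('a, 'q::quantale) qpos \<Rightarrow> ('b, 'q) qpos \<Rightarrow> ('a \<Rightarrow> 'b \<Rightarrow> 'q) \<Rightarrow>
    'q \<times> (unit \<Rightarrow> 'a \<Rightarrow> 'q) \<Rightarrow> 'q \<times> (unit \<Rightarrow> 'b \<Rightarrow> 'q)" where
  "dax_right X Y \<phi> = (\<lambda>k\<in>PD_car X. (fst k, qcomp (qs X) \<phi> (snd k)))"

lemma fst_dax_left [simp]: "l \<in> PD_car Y \<Longrightarrow> fst (dax_left X Y \<phi> l) = fst l"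
  by (simp add: dax_left_def)

lemma fst_dax_right [simp]: "k \<in> PD_car X \<Longrightarrow> fst (dax_right X Y \<phi> k) = fst k"
  by (simp add: dax_right_def)

lemma snd_dax_right:
  "k \<in> PD_car X \<Longrightarrow>
   snd (dax_right X Y \<phi> k) u y = Sup ((\<lambda>x. qmult (rdiv (\<phi> x y) (ext X x)) (snd k () x)) ` car X)"
  by (simp add: dax_right_def qcomp_def qs_def)

lemma dax_right_upper:
  "k \<in> PD_car X \<Longrightarrow> x \<in> car X \<Longrightarrow> qmult (rdiv (\<phi> x y) (ext X x)) (snd k () x) \<le> snd (dax_right X Y \<phi> k) () y"
  by (simp add: snd_dax_right Sup_upper)

lemma dax_right_least:
  "k \<in> PD_car X \<Longrightarrow> (\<And>x. x \<in> car X \<Longrightarrow> qmult (rdiv (\<phi> x y) (ext X x)) (snd k () x) \<le> c) \<Longrightarrow>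
   snd (dax_right X Y \<phi> k) () y \<le> c"
  by (auto simp: snd_dax_right intro!: Sup_least)

lemma dax_left_DQ:
  "l \<in> PD_car Y \<Longrightarrow> x \<in> car X \<Longrightarrow> snd (dax_left X Y \<phi> l) () x \<in> DQ (fst l) (ext X x)"
  by (simp add: dax_left_def dq_limp_DQ)

lemma dax_left_le:
  "l \<in> PD_car Y \<Longrightarrow> x \<in> car X \<Longrightarrow> y \<in> car Y \<Longrightarrow>
   qmult (rdiv (\<phi> x y) (ext X x)) (snd (dax_left X Y \<phi> l) () x) \<le> snd l () y"
  unfolding dax_left_def by (simp, rule dq_limp_le)

lemma dax_left_greatest:
  "l \<in> PD_car Y \<Longrightarrow> x \<in> car X \<Longrightarrow> u \<in> DQ (fst l) (ext X x) \<Longrightarrow>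
   (\<And>y. y \<in> car Y \<Longrightarrow> qmult (rdiv (\<phi> x y) (ext X x)) u \<le> snd l () y) \<Longrightarrow>
   u \<le> snd (dax_left X Y \<phi> l) () x"
  by (simp add: dax_left_def dq_limp_greatest)

context
  fixes X :: "('a, 'q::quantale) qpos" and Y :: "('b, 'q) qpos" and \<phi>
  assumes X: "qpreordered X" and Y: "qpreordered Y" and \<phi>: "\<phi> \<in> distributors X Y"
begin

lemma dax_right_DQ:
  assumes k: "k \<in> PD_car X" and y: "y \<in> car Y"
  shows "snd (dax_right X Y \<phi> k) () y \<in> DQ (fst k) (ext Y y)"
  unfolding snd_dax_right[OF k]
  using DQ_comp[OF distributor_DQ[OF X Y \<phi> _ y] PD_car_DQ[OF k]] by (intro DQ_Sup) auto

lemma dax_left_PD_car: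
  assumes l: "l \<in> PD_car Y"
  shows "dax_left X Y \<phi> l \<in> PD_car X"
proof -
  have "(fst l, snd (dax_left X Y \<phi> l)) \<in> PD_car X"
  proof (rule PD_carI)
    fix x x' assume x: "x \<in> car X" "x' \<in> car X"
    let ?c = "qmult (rdiv (pre X x' x) (ext X x')) (snd (dax_left X Y \<phi> l) () x')"
    show "?c \<le> snd (dax_left X Y \<phi> l) () x"
    proof (rule dax_left_greatest[OF l x(1) DQ_comp[OF pre_DQ[OF X x(2,1)] dax_left_DQ[OF l x(2)]]])
      fix y assume y: "y \<in> car Y"
      have "qmult (rdiv (\<phi> x y) (ext X x)) ?c \<le>
          qmult (rdiv (qmult (rdiv (\<phi> x y) (ext X x)) (pre X x' x)) (ext X x')) (snd (dax_left X Y \<phi> l) () x')"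
        unfolding qmult_assoc[symmetric] by (intro qmult_mono_left mult_rdiv_le_rdiv_mult)
      also have "\<dots> \<le> qmult (rdiv (\<phi> x' y) (ext X x')) (snd (dax_left X Y \<phi> l) () x')"
        by (intro qmult_mono_left rdiv_mono distributor_pre_left[OF X Y \<phi> x(2,1) y])
      also have "\<dots> \<le> snd l () y" by (rule dax_left_le[OF l x(2) y])
      finally show "qmult (rdiv (\<phi> x y) (ext X x)) ?c \<le> snd l () y" .
    qed
  qed (use l in \<open>simp_all add: dax_left_def dq_limp_DQ\<close>)
  then show ?thesis using l by (simp add: dax_left_def)
qed

lemma dax_right_PD_car:
  assumes k: "k \<in> PD_car X"
  shows "dax_right X Y \<phi> k \<in> PD_car Y"
proof -
  have "(fst k, snd (dax_right X Y \<phi> k)) \<in> PD_car Y"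
  proof (rule PD_carI)
    fix y y' assume y: "y \<in> car Y" "y' \<in> car Y"
    show "qmult (rdiv (pre Y y' y) (ext Y y')) (snd (dax_right X Y \<phi> k) () y') \<le> snd (dax_right X Y \<phi> k) () y"
      unfolding snd_dax_right[OF k, of _ _ _ y'] qmult_Sup_right image_image
    proof (rule Sup_least, clarify)
      fix x assume x: "x \<in> car X"
      have "qmult (rdiv (pre Y y' y) (ext Y y')) (qmult (rdiv (\<phi> x y') (ext X x)) (snd k () x))
          \<le> qmult (rdiv (qmult (rdiv (pre Y y' y) (ext Y y')) (\<phi> x y')) (ext X x)) (snd k () x)"
        unfolding qmult_assoc[symmetric] by (intro qmult_mono_left mult_rdiv_le_rdiv_mult)
      also have "\<dots> \<le> qmult (rdiv (\<phi> x y) (ext X x)) (snd k () x)"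
        by (intro qmult_mono_left rdiv_mono distributor_pre_right[OF X Y \<phi> x y])
      also have "\<dots> \<le> snd (dax_right X Y \<phi> k) () y" by (rule dax_right_upper[OF k x])
      finally show "qmult (rdiv (pre Y y' y) (ext Y y')) (qmult (rdiv (\<phi> x y') (ext X x)) (snd k () x))
          \<le> snd (dax_right X Y \<phi> k) () y" .
    qed
  next
    fix y assume "y \<notin> car Y"
    then show "snd (dax_right X Y \<phi> k) () y = bot"
      using distributor_bot[OF X Y \<phi>] DQ_rdiv_bot_mult[OF PD_car_DQ[OF k]]
      by (simp add: snd_dax_right[OF k])
  qed (rule dax_right_DQ[OF k])
  then show ?thesis using k by (simp add: dax_right_def)
qed


lemma pre_le_pre_dax_left:
  assumes l: "l \<in> PD_car Y" and l': "l' \<in> PD_car Y"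
  shows "pre (PD Y) l l' \<le> pre (PD X) (dax_left X Y \<phi> l) (dax_left X Y \<phi> l')"
proof (rule PD_pre_greatest[OF dax_left_PD_car[OF l] dax_left_PD_car[OF l']])
  show "pre (PD Y) l l' \<in> DQ (fst (dax_left X Y \<phi> l)) (fst (dax_left X Y \<phi> l'))"
    using PD_pre_DQ[OF l l'] l l' by simp
next
  fix x assume x: "x \<in> car X"
  let ?w = "pre (PD Y) l l'"
  let ?c = "qmult (rdiv (snd (dax_left X Y \<phi> l') () x) (fst l')) ?w"
  have w: "?w \<in> DQ (fst l) (fst l')" by (rule PD_pre_DQ[OF l l'])
  have "?c \<le> snd (dax_left X Y \<phi> l) () x"
  proof (rule dax_left_greatest[OF l x DQ_comp[OF dax_left_DQ[OF l' x] w]])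
    fix y assume y: "y \<in> car Y"
    have "qmult (rdiv (\<phi> x y) (ext X x)) ?c \<le>
        qmult (rdiv (qmult (rdiv (\<phi> x y) (ext X x)) (snd (dax_left X Y \<phi> l') () x)) (fst l')) ?w"
      unfolding qmult_assoc[symmetric] by (intro qmult_mono_left mult_rdiv_le_rdiv_mult)
    also have "\<dots> \<le> qmult (rdiv (snd l' () y) (fst l')) ?w"
      by (intro qmult_mono_left rdiv_mono dax_left_le[OF l' x y])
    also have "\<dots> \<le> snd l () y" by (rule PD_pre_le[OF l l' y])
    finally show "qmult (rdiv (\<phi> x y) (ext X x)) ?c \<le> snd l () y" .
  qed
  then show "qmult (rdiv (snd (dax_left X Y \<phi> l') () x) (fst (dax_left X Y \<phi> l'))) ?w
      \<le> snd (dax_left X Y \<phi> l) () x"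
    using l' by simp
qed

lemma pre_le_pre_dax_right:
  assumes k: "k \<in> PD_car X" and k': "k' \<in> PD_car X"
  shows "pre (PD X) k k' \<le> pre (PD Y) (dax_right X Y \<phi> k) (dax_right X Y \<phi> k')"
proof (rule PD_pre_greatest[OF dax_right_PD_car[OF k] dax_right_PD_car[OF k']])
  show "pre (PD X) k k' \<in> DQ (fst (dax_right X Y \<phi> k)) (fst (dax_right X Y \<phi> k'))"
    using PD_pre_DQ[OF k k'] k k' by simp
next
  fix y assume y: "y \<in> car Y"
  let ?w = "pre (PD X) k k'"
  have w: "?w \<in> DQ (fst k) (fst k')" by (rule PD_pre_DQ[OF k k'])
  have "qmult (rdiv (snd (dax_right X Y \<phi> k') () y) (fst k')) ?w
      = qmult (snd (dax_right X Y \<phi> k') () y) (ldiv (fst k') ?w)"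
    by (rule rdiv_mult_eq_mult_ldiv[OF DQ_rdiv_cancel[OF dax_right_DQ[OF k' y]] DQ_ldiv_cancel[OF w]])
  also have "\<dots> = Sup ((\<lambda>x. qmult (qmult (rdiv (\<phi> x y) (ext X x)) (snd k' () x)) (ldiv (fst k') ?w)) ` car X)"
    unfolding snd_dax_right[OF k'] qmult_Sup_left image_image ..
  also have "\<dots> \<le> snd (dax_right X Y \<phi> k) () y"
  proof (rule Sup_least, clarify)
    fix x assume x: "x \<in> car X"
    have "qmult (qmult (rdiv (\<phi> x y) (ext X x)) (snd k' () x)) (ldiv (fst k') ?w)
        = qmult (rdiv (\<phi> x y) (ext X x)) (qmult (rdiv (snd k' () x) (fst k')) ?w)"
      unfolding qmult_assoc
      using rdiv_mult_eq_mult_ldiv[OF DQ_rdiv_cancel[OF PD_car_DQ[OF k' x]] DQ_ldiv_cancel[OF w]] by simp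
    also have "\<dots> \<le> qmult (rdiv (\<phi> x y) (ext X x)) (snd k () x)"
      by (rule qmult_mono_right[OF PD_pre_le[OF k k' x]])
    also have "\<dots> \<le> snd (dax_right X Y \<phi> k) () y" by (rule dax_right_upper[OF k x])
    finally show "qmult (qmult (rdiv (\<phi> x y) (ext X x)) (snd k' () x)) (ldiv (fst k') ?w)
        \<le> snd (dax_right X Y \<phi> k) () y" .
  qed
  finally show "qmult (rdiv (snd (dax_right X Y \<phi> k') () y) (fst (dax_right X Y \<phi> k'))) ?w
      \<le> snd (dax_right X Y \<phi> k) () y"
    using k' by simp
qed

lemma qgalois_dax: "qgalois (PD Y) (PD X) (dax_left X Y \<phi>) (dax_right X Y \<phi>)"
  unfolding qgalois_def
proof (intro conjI ballI)
  show "qmono (PD Y) (PD X) (dax_left X Y \<phi>)"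
    by (simp add: qmono_def dax_left_PD_car pre_le_pre_dax_left) (simp add: dax_left_def)
  show "qmono (PD X) (PD Y) (dax_right X Y \<phi>)"
    by (simp add: qmono_def dax_right_PD_car pre_le_pre_dax_right) (simp add: dax_right_def)
next
  fix l assume "l \<in> car (PD Y)"
  then have l: "l \<in> PD_car Y" by simp
  have k: "dax_left X Y \<phi> l \<in> PD_car X" by (rule dax_left_PD_car[OF l])
  have "snd (dax_right X Y \<phi> (dax_left X Y \<phi> l)) () y \<le> snd l () y" if y: "y \<in> car Y" for y
    using dax_left_le[OF l _ y] by (intro dax_right_least[OF k])
  then show "ext (PD Y) l \<le> pre (PD Y) l (dax_right X Y \<phi> (dax_left X Y \<phi> l))"
    using PD_extent_le_pre_iff[OF l dax_right_PD_car[OF k] refl] k l by simp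
next
  fix k assume "k \<in> car (PD X)"
  then have k: "k \<in> PD_car X" by simp
  have l: "dax_right X Y \<phi> k \<in> PD_car Y" by (rule dax_right_PD_car[OF k])
  have "snd k () x \<le> snd (dax_left X Y \<phi> (dax_right X Y \<phi> k)) () x" if x: "x \<in> car X" for x
    using PD_car_DQ[OF k x] dax_right_upper[OF k x] k
    by (intro dax_left_greatest[OF l x]) simp_all
  then show "ext (PD X) k \<le> pre (PD X) (dax_left X Y \<phi> (dax_right X Y \<phi> k)) k"
    using PD_extent_le_pre_iff[OF dax_left_PD_car[OF l] k _ refl] k l by simp
qed

lemma dax_right_coyoneda:
  assumes x: "x \<in> car X"
  shows "dax_right X Y \<phi> (coyoneda X x) = dist_to_PD X Y \<phi> x"
proof (rule PD_eqI)
  have cx: "coyoneda X x \<in> PD_car X" by (rule coyoneda_PD_car[OF X x])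
  show "dax_right X Y \<phi> (coyoneda X x) \<in> PD_car Y" by (rule dax_right_PD_car[OF cx])
  show "dist_to_PD X Y \<phi> x \<in> PD_car Y"
    using dist_to_PD_qmaps[OF X Y \<phi>] x by (simp add: qmaps_def qmono_def)
  show "fst (dax_right X Y \<phi> (coyoneda X x)) = fst (dist_to_PD X Y \<phi> x)"
    using cx x by (simp add: coyoneda_eq[OF X x] dist_to_PD_def)
  fix y assume y: "y \<in> car Y"
  have le: "snd (dax_right X Y \<phi> (coyoneda X x)) () y \<le> \<phi> x y"
    using distributor_pre_left[OF X Y \<phi> x _ y]
    by (intro dax_right_least[OF cx]) (simp add: coyoneda_eq[OF X x])
  have "\<phi> x y \<le> qmult (rdiv (\<phi> x y) (ext X x)) (pre X x x)"
    by (rule DQ_le_mult_rdiv[OF distributor_DQ[OF X Y \<phi> x y] pre_refl[OF X x]])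
  also have "\<dots> \<le> snd (dax_right X Y \<phi> (coyoneda X x)) () y"
    using dax_right_upper[where Y = Y and \<phi> = \<phi> and y = y, OF cx x] by (simp add: coyoneda_eq[OF X x])
  finally show "snd (dax_right X Y \<phi> (coyoneda X x)) () y = snd (dist_to_PD X Y \<phi> x) () y"
    using le x by (simp add: dist_to_PD_def)
qed

lemma PD_to_dist_dax_right_coyoneda: "PD_to_dist X Y (compose (car X) (dax_right X Y \<phi>) (coyoneda X)) = \<phi>"
proof -
  have "compose (car X) (dax_right X Y \<phi>) (coyoneda X) = dist_to_PD X Y \<phi>"
    by (rule ext) (simp add: compose_def dax_right_coyoneda dist_to_PD_def)
  then show ?thesis using PD_to_dist_dist_to_PD[OF X Y \<phi>] by simp
qed
end

locale dual_axiality = qgalois_pair "PD Y" "PD X" f g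
  for X :: "('a, 'q::quantale) qpos" and Y :: "('b, 'q) qpos" and f g +
  assumes X: "qpreordered X" and Y: "qpreordered Y"
begin

lemma f_PD_car: "l \<in> PD_car Y \<Longrightarrow> f l \<in> PD_car X" and fst_f: "l \<in> PD_car Y \<Longrightarrow> fst (f l) = fst l"
  and g_PD_car: "k \<in> PD_car X \<Longrightarrow> g k \<in> PD_car Y" and fst_g: "k \<in> PD_car X \<Longrightarrow> fst (g k) = fst k"
  using f_car ext_f g_car ext_g by simp_all

lemma f_pre_le: "l \<in> PD_car Y \<Longrightarrow> l' \<in> PD_car Y \<Longrightarrow> pre (PD Y) l l' \<le> pre (PD X) (f l) (f l')"
  and g_pre_le: "k \<in> PD_car X \<Longrightarrow> k' \<in> PD_car X \<Longrightarrow> pre (PD X) k k' \<le> pre (PD Y) (g k) (g k')"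
  using f_pre g_pre by simp_all

lemma unit_le: "l \<in> PD_car Y \<Longrightarrow> y \<in> car Y \<Longrightarrow> snd (g (f l)) () y \<le> snd l () y"
  using unit_pre PD_extent_le_pre_iff[OF _ g_PD_car[OF f_PD_car] refl] by (simp add: fst_f fst_g f_PD_car)

lemma counit_le: "k \<in> PD_car X \<Longrightarrow> x \<in> car X \<Longrightarrow> snd k () x \<le> snd (f (g k)) () x"
  using counit_pre PD_extent_le_pre_iff[OF f_PD_car[OF g_PD_car] _ _ refl] by (simp add: fst_f fst_g g_PD_car)

definition \<phi> :: "'a \<Rightarrow> 'b \<Rightarrow> 'q" where
  "\<phi> = PD_to_dist X Y (compose (car X) g (coyoneda X))"

lemma \<phi>_distributor: "\<phi> \<in> distributors X Y"
  unfolding \<phi>_def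
  by (rule PD_to_dist_distributors[OF X Y]) (simp add: qmaps_def qmono_compose[OF qmono_coyoneda[OF X] g_qmono])

lemma \<phi>_eq: "x \<in> car X \<Longrightarrow> \<phi> x y = snd (g (coyoneda X x)) () y"
  by (simp add: \<phi>_def PD_to_dist_def compose_def)

lemma g_coyoneda: "x \<in> car X \<Longrightarrow> g (coyoneda X x) \<in> PD_car Y"
  and fst_g_coyoneda: "x \<in> car X \<Longrightarrow> fst (g (coyoneda X x)) = ext X x"
  using g_PD_car fst_g coyoneda_PD_car[OF X] by (simp_all add: coyoneda_eq[OF X])

lemma f_eq:
  assumes l: "l \<in> PD_car Y" and x: "x \<in> car X"
  shows "snd (f l) () x = snd (dax_left X Y \<phi> l) () x"
proof (rule antisym)
  let ?u = "snd (f l) () x" and ?gc = "g (coyoneda X x)"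
  have fl: "f l \<in> PD_car X" "fst (f l) = fst l" using f_PD_car[OF l] fst_f[OF l] .
  show "?u \<le> snd (dax_left X Y \<phi> l) () x"
  proof (rule dax_left_greatest[OF l x])
    show "?u \<in> DQ (fst l) (ext X x)" using PD_car_DQ[OF fl(1) x] fl(2) by simp
  next
    fix y assume y: "y \<in> car Y"
    have "?u \<le> pre (PD Y) (g (f l)) ?gc"
      using le_pre_coyoneda[OF X fl(1) x] g_pre_le[OF fl(1) coyoneda_PD_car[OF X x]] by (rule order_trans)
    then have "qmult (rdiv (\<phi> x y) (ext X x)) ?u
        \<le> qmult (rdiv (snd ?gc () y) (fst ?gc)) (pre (PD Y) (g (f l)) ?gc)"
      using fst_g_coyoneda[OF x] \<phi>_eq[OF x] by (simp add: qmult_mono_right)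
    also have "\<dots> \<le> snd (g (f l)) () y" by (rule PD_pre_le[OF g_PD_car[OF fl(1)] g_coyoneda[OF x] y])
    also have "\<dots> \<le> snd l () y" by (rule unit_le[OF l y])
    finally show "qmult (rdiv (\<phi> x y) (ext X x)) ?u \<le> snd l () y" .
  qed
  let ?v = "snd (dax_left X Y \<phi> l) () x" and ?fgc = "f (g (coyoneda X x))"
  have v: "?v \<in> DQ (fst l) (ext X x)" by (rule dax_left_DQ[OF l x])
  have "?v \<le> pre (PD Y) l ?gc"
    using v fst_g_coyoneda[OF x] dax_left_le[where \<phi> = \<phi>, OF l x] \<phi>_eq[OF x]
    by (intro PD_pre_greatest[OF l g_coyoneda[OF x]]) simp_all
  also have "\<dots> \<le> pre (PD X) (f l) ?fgc" by (rule f_pre_le[OF l g_coyoneda[OF x]])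
  finally have vle: "?v \<le> pre (PD X) (f l) ?fgc" .
  have fg: "?fgc \<in> PD_car X" "fst ?fgc = ext X x"
    using f_PD_car[OF g_coyoneda[OF x]] fst_f[OF g_coyoneda[OF x]] fst_g_coyoneda[OF x] by simp_all
  have "ext X x \<le> snd ?fgc () x"
    using pre_refl[OF X x] counit_le[OF coyoneda_PD_car[OF X x] x] by (simp add: coyoneda_eq[OF X x])
  then have "?v \<le> qmult (rdiv (snd ?fgc () x) (ext X x)) ?v" by (rule le_mult_rdiv)
  also have "\<dots> \<le> qmult (rdiv (snd ?fgc () x) (fst ?fgc)) (pre (PD X) (f l) ?fgc)"
    using vle fg(2) by (simp add: qmult_mono_right)
  also have "\<dots> \<le> ?u" by (rule PD_pre_le[OF fl(1) fg(1) x])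
  finally show "?v \<le> ?u" .
qed

lemma f_eq_dax_left: "f = dax_left X Y \<phi>"
proof
  fix l show "f l = dax_left X Y \<phi> l"
  proof (cases "l \<in> PD_car Y")
    case True
    then show ?thesis
      using f_PD_car fst_f dax_left_PD_car[OF X Y \<phi>_distributor] f_eq
      by (intro PD_eqI) simp_all
  next
    case False
    then show ?thesis using f_undefined by (simp add: dax_left_def)
  qed
qed

lemma g_eq:
  assumes k: "k \<in> PD_car X" and y: "y \<in> car Y"
  shows "snd (g k) () y = snd (dax_right X Y \<phi> k) () y"
proof (rule antisym[rotated])
  show "snd (dax_right X Y \<phi> k) () y \<le> snd (g k) () y"
  proof (rule dax_right_least[OF k])
    fix x assume x: "x \<in> car X"
    let ?gc = "g (coyoneda X x)"
    have "snd k () x \<le> pre (PD Y) (g k) ?gc"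
      using le_pre_coyoneda[OF X k x] g_pre_le[OF k coyoneda_PD_car[OF X x]] by (rule order_trans)
    then have "qmult (rdiv (\<phi> x y) (ext X x)) (snd k () x)
        \<le> qmult (rdiv (snd ?gc () y) (fst ?gc)) (pre (PD Y) (g k) ?gc)"
      using fst_g_coyoneda[OF x] \<phi>_eq[OF x] by (simp add: qmult_mono_right)
    also have "\<dots> \<le> snd (g k) () y" by (rule PD_pre_le[OF g_PD_car[OF k] g_coyoneda[OF x] y])
    finally show "qmult (rdiv (\<phi> x y) (ext X x)) (snd k () x) \<le> snd (g k) () y" .
  qed
  let ?l = "dax_right X Y \<phi> k"
  have l: "?l \<in> PD_car Y" "fst ?l = fst k"
    using dax_right_PD_car[OF X Y \<phi>_distributor k] k by simp_all
  have fl: "f ?l \<in> PD_car X" "fst (f ?l) = fst k" using f_PD_car[OF l(1)] fst_f[OF l(1)] l(2) by simp_all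
  have "snd k () x \<le> snd (f ?l) () x" if x: "x \<in> car X" for x
  proof -
    have "snd k () x \<le> snd (dax_left X Y \<phi> ?l) () x"
      using PD_car_DQ[OF k x] l(2) dax_right_upper[OF k x]
      by (intro dax_left_greatest[OF l(1) x]) simp_all
    then show ?thesis using f_eq[OF l(1) x] by simp
  qed
  then have "fst k \<le> pre (PD X) (f ?l) k"
    using PD_extent_le_pre_iff[OF fl(1) k fl(2) refl] by simp
  also have "\<dots> \<le> pre (PD Y) (g (f ?l)) (g k)" by (rule g_pre_le[OF fl(1) k])
  finally have "snd (g k) () y \<le> snd (g (f ?l)) () y"
    using PD_extent_le_pre_iff[OF g_PD_car[OF fl(1)] g_PD_car[OF k] fst_g[OF fl(1)]] fl(2) fst_g[OF k] y
    by simp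
  also have "\<dots> \<le> snd ?l () y" by (rule unit_le[OF l(1) y])
  finally show "snd (g k) () y \<le> snd ?l () y" .
qed

lemma g_eq_dax_right: "g = dax_right X Y \<phi>"
proof
  fix k show "g k = dax_right X Y \<phi> k"
  proof (cases "k \<in> PD_car X")
    case True
    then show ?thesis
      using g_PD_car fst_g dax_right_PD_car[OF X Y \<phi>_distributor] g_eq
      by (intro PD_eqI) simp_all
  next
    case False
    then show ?thesis using g_undefined by (simp add: dax_right_def)
  qed
qed

end

lemma bij_betw_distributors_dual_axialities:
  assumes X: "qpreordered X" and Y: "qpreordered Y"
  shows "bij_betw (\<lambda>\<phi>. (dax_left X Y \<phi>, dax_right X Y \<phi>)) (distributors X Y) (dual_axialities Y X)"
proof (rule bij_betw_byWitness[where f' = "\<lambda>p. PD_to_dist X Y (compose (car X) (snd p) (coyoneda X))"])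
  have dual_axiality: "dual_axiality X Y f g" if "(f, g) \<in> dual_axialities Y X" for f g
    using that X Y
    by (simp add: dual_axiality_def dual_axiality_axioms_def qgalois_pair_def dual_axialities_def qgalois_set_def)
  show "\<forall>\<phi>\<in>distributors X Y.
      PD_to_dist X Y (compose (car X) (snd (dax_left X Y \<phi>, dax_right X Y \<phi>)) (coyoneda X)) = \<phi>"
    using PD_to_dist_dax_right_coyoneda[OF X Y] by simp
  show "\<forall>p\<in>dual_axialities Y X. (dax_left X Y (PD_to_dist X Y (compose (car X) (snd p) (coyoneda X))),
      dax_right X Y (PD_to_dist X Y (compose (car X) (snd p) (coyoneda X)))) = p"
  proof
    fix p assume p: "p \<in> dual_axialities Y X"
    obtain f g where fg: "p = (f, g)" by fastforce
    interpret dual_axiality X Y f g using p fg by (simp add: dual_axiality)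
    show "(dax_left X Y (PD_to_dist X Y (compose (car X) (snd p) (coyoneda X))),
        dax_right X Y (PD_to_dist X Y (compose (car X) (snd p) (coyoneda X)))) = p"
      using f_eq_dax_left g_eq_dax_right by (simp add: fg \<phi>_def)
  qed
  show "(\<lambda>\<phi>. (dax_left X Y \<phi>, dax_right X Y \<phi>)) ` distributors X Y \<subseteq> dual_axialities Y X"
    using qgalois_dax[OF X Y] by (auto simp: dual_axialities_def qgalois_set_def)
  show "(\<lambda>p. PD_to_dist X Y (compose (car X) (snd p) (coyoneda X))) ` dual_axialities Y X \<subseteq> distributors X Y"
  proof (rule image_subsetI)
    fix p assume p: "p \<in> dual_axialities Y X"
    obtain f g where fg: "p = (f, g)" by fastforce
    interpret dual_axiality X Y f g using p fg by (simp add: dual_axiality)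
    show "PD_to_dist X Y (compose (car X) (snd p) (coyoneda X)) \<in> distributors X Y"
      using \<phi>_distributor by (simp add: fg \<phi>_def)
  qed
qed

theorem theorem4p24:
  fixes X :: "('a, 'q::quantale) qpos" and Y :: "('b, 'q) qpos"
  assumes "qpreordered X" and "qpreordered Y"
  shows "(\<exists>F. bij_betw F (distributors X Y) (qmaps Y (PP X))) \<and>
         (\<exists>F. bij_betw F (distributors X Y) (qmaps X (PD Y))) \<and>
         (\<exists>F. bij_betw F (distributors X Y) (polarities X Y)) \<and>
         (\<exists>F. bij_betw F (distributors X Y) (axialities Y X)) \<and>
         (\<exists>F. bij_betw F (distributors X Y) (dual_axialities Y X))"
  using bij_betw_dist_to_PP[OF assms] bij_betw_dist_to_PD[OF assms]
    bij_betw_distributors_polarities[OF assms] bij_betw_distributors_axialities[OF assms]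
    bij_betw_distributors_dual_axialities[OF assms]
  by blast

end
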